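(* Let $d\ge3$, $N\ge1$, and let the inverse temperature $\beta>0$ be finite. Let $\mathbf p$ be a probability vector on $d$ levels and let $i_1,i_2,i_3$ be distinct levels that are consecutive neighbours in the $\beta$-order of $\mathbf p$: $\pi_{\mathbf p}(i_3)=\pi_{\mathbf p}(i_2)+1=\pi_{\mathbf p}(i_1)+2$. Let $\Pi=\Pi_{i_1i_3}\Pi_{i_2i_3}$, let $\Pi_{\mathbf p}$ be the permutation matrix of $\pi_{\mathbf p}$, let $\pi'$ be the permutation with matrix $\Pi'=\Pi\,\Pi_{\mathbf p}$, and let $\mathbf p^{\pi'}$ be the corresponding extreme point of $C^{\mathrm{TO}}_+(\mathbf p)$. Using an $N$-dimensional memory with trivial Hamiltonian, let $\widetilde{\mathcal P}^{\Pi}=\mathcal T\circ\widetilde{\mathcal P}^{(i_1i_3)}\circ\widetilde{\mathcal P}^{(i_2i_3)}$. Then $$\widetilde{\mathcal P}^{\Pi}(\mathbf p\otimes\boldsymbol\eta_M)=\mathbf q\otimes\boldsymbol\eta_M\quad\text{with}\quad \delta\big(\mathbf q,\mathbf p^{\pi'}\big)\xrightarrow{N\to\infty}0.$$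
   Context: Setting: a $d$-level system with energies $E_1,\dots,E_d$ and thermal distribution $\gamma_a=e^{-\beta E_a}/\sum_b e^{-\beta E_b}$; an $N$-dimensional memory with trivial Hamiltonian and thermal state $\boldsymbol\eta_M=(1/N,\dots,1/N)$. Joint states are probability vectors $\mathbf Q$ of length $dN$, entry $(a-1)N+k$ corresponding to system level $a$ and memory level $k$; joint thermal distribution $\Gamma_{(a-1)N+k}=\gamma_a/N$. $\Pi_{ij}$ is the permutation matrix transposing $i,j$. Two-level thermalisation $T_{xy}$: $Q_x\mapsto (Q_x+Q_y)\Gamma_x/(\Gamma_x+\Gamma_y)$, $Q_y\mapsto (Q_x+Q_y)\Gamma_y/(\Gamma_x+\Gamma_y)$, other entries unchanged. Round $\mathcal R^{(ij)}_k$ ($k=1,\dots,N$): apply sequentially, for $l=1,\dots,N$, $T_{(j-1)N+k,\,(i-1)N+l}$. $\widetilde{\mathcal P}^{(ij)}=\mathcal R^{(ij)}_N\circ\cdots\circ\mathcal R^{(ij)}_1$. Memory thermalisation $\mathcal T(\mathbf Q)=\mathbf q\otimes\boldsymbol\eta_M$, $q_a=\sum_kQ_{(a-1)N+k}$. $\beta$-order: $\pi_{\mathbf p}$ is the permutation arranging $(p_1/\gamma_1,\dots,p_d/\gamma_d)$ in non-increasing order, $\pi_{\mathbf p}(a)$ being the position of level $a$; $\Pi_{\mathbf p}$ is its matrix, so $\Pi_{\mathbf p}\mathbf p=(p_{\pi_{\mathbf p}^{-1}(1)},\dots,p_{\pi_{\mathbf p}^{-1}(d)})$. Thermomajorisation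 curve $f^\beta_{\mathbf p}$: the piecewise linear curve on $[0,1]$ joining $(0,0)$ and the points $\big(\sum_{l=1}^k\gamma_{\pi_{\mathbf p}^{-1}(l)},\sum_{l=1}^kp_{\pi_{\mathbf p}^{-1}(l)}\big)$, $k=1,\dots,d$. $C^{\mathrm{TO}}_+(\mathbf p)$ is the set of $\mathbf q$ with $f^\beta_{\mathbf p}\ge f^\beta_{\mathbf q}$ on $[0,1]$ (states reachable by thermal operations). For a permutation $\pi$ of $\{1,\dots,d\}$ the point $\mathbf p^{\pi}$ is defined by $x_k=\sum_{l=1}^k\gamma_{\pi^{-1}(l)}$, $y_k=f^\beta_{\mathbf p}(x_k)$, $y_0=0$, and $p^{\pi}_a=y_{\pi(a)}-y_{\pi(a)-1}$; these are the extreme points of $C^{\mathrm{TO}}_+(\mathbf p)$. Total variation distance: $\delta(\mathbf p,\mathbf q)=\frac12\sum_a|p_a-q_a|$. *)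

theory Defs
  imports "HOL-Analysis.Analysis" "HOL-Combinatorics.Transposition"
begin

text \<open>Levels of the system are 1..d; memory levels are 1..N; joint entries are
  indexed linearly by (a-1)*N+k in 1..d*N, as in the paper.  Vectors are functions
  nat => real, only their values on the relevant index range matter.\<close>

definition gibbs :: "nat \<Rightarrow> real \<Rightarrow> (nat \<Rightarrow> real) \<Rightarrow> nat \<Rightarrow> real" where
  "gibbs d \<beta> E a = exp (- \<beta> * E a) / (\<Sum>b=1..d. exp (- \<beta> * E b))"

definition prob_vec :: "nat \<Rightarrow> (nat \<Rightarrow> real) \<Rightarrow> bool" where
  "prob_vec d p \<longleftrightarrow> (\<forall>a\<in>{1..d}. 0 \<le> p a) \<and> (\<Sum>a=1..d. p a) = 1"

definition jidx :: "nat \<Rightarrow> nat \<Rightarrow> nat \<Rightarrow> nat" where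
  "jidx N a k = (a - 1) * N + k"

definition sys_level :: "nat \<Rightarrow> nat \<Rightarrow> nat" where
  "sys_level N x = (x - 1) div N + 1"

definition joint_gibbs :: "nat \<Rightarrow> real \<Rightarrow> (nat \<Rightarrow> real) \<Rightarrow> nat \<Rightarrow> nat \<Rightarrow> real" where
  "joint_gibbs d \<beta> E N x = gibbs d \<beta> E (sys_level N x) / real N"

definition tensor_eta :: "nat \<Rightarrow> nat \<Rightarrow> (nat \<Rightarrow> real) \<Rightarrow> nat \<Rightarrow> real" where
  "tensor_eta d N q x = (if 1 \<le> x \<and> x \<le> d * N then q (sys_level N x) / real N else 0)"

definition therm2 :: "(nat \<Rightarrow> real) \<Rightarrow> nat \<Rightarrow> nat \<Rightarrow> (nat \<Rightarrow> real) \<Rightarrow> nat \<Rightarrow> real" where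
  "therm2 G x y Q = Q(x := (Q x + Q y) * G x / (G x + G y),
                      y := (Q x + Q y) * G y / (G x + G y))"

definition round_op :: "(nat \<Rightarrow> real) \<Rightarrow> nat \<Rightarrow> nat \<Rightarrow> nat \<Rightarrow> nat \<Rightarrow> (nat \<Rightarrow> real) \<Rightarrow> nat \<Rightarrow> real" where
  "round_op G N i j k Q = fold (\<lambda>l. therm2 G (jidx N j k) (jidx N i l)) [1..<N+1] Q"

definition swap_protocol :: "(nat \<Rightarrow> real) \<Rightarrow> nat \<Rightarrow> nat \<Rightarrow> nat \<Rightarrow> (nat \<Rightarrow> real) \<Rightarrow> nat \<Rightarrow> real" where
  "swap_protocol G N i j Q = fold (\<lambda>k. round_op G N i j k) [1..<N+1] Q"

definition marginal :: "nat \<Rightarrow> (nat \<Rightarrow> real) \<Rightarrow> nat \<Rightarrow> real" where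
  "marginal N Q a = (\<Sum>k=1..N. Q (jidx N a k))"

definition mem_therm :: "nat \<Rightarrow> nat \<Rightarrow> (nat \<Rightarrow> real) \<Rightarrow> nat \<Rightarrow> real" where
  "mem_therm d N Q = tensor_eta d N (marginal N Q)"

text \<open>pi is a beta-order of p: a bijection of {1..d} (level |-> position) arranging
  p_a / gamma_a in non-increasing order\<close>
definition beta_order :: "nat \<Rightarrow> (nat \<Rightarrow> real) \<Rightarrow> (nat \<Rightarrow> real) \<Rightarrow> (nat \<Rightarrow> nat) \<Rightarrow> bool" where
  "beta_order d \<gamma> p \<pi> \<longleftrightarrow> bij_betw \<pi> {1..d} {1..d} \<and>
     (\<forall>a\<in>{1..d}. \<forall>b\<in>{1..d}. \<pi> a < \<pi> b \<longrightarrow> p b / \<gamma> b \<le> p a / \<gamma> a)"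

definition cum :: "nat \<Rightarrow> (nat \<Rightarrow> nat) \<Rightarrow> (nat \<Rightarrow> real) \<Rightarrow> nat \<Rightarrow> real" where
  "cum d \<pi> v k = (\<Sum>l=1..k. v (inv_into {1..d} \<pi> l))"

text \<open>thermomajorisation curve f^beta_p: piecewise linear interpolation through (0,0) and
  the points (cum gamma k, cum p k), k = 1..d, built from the beta-order pi of p\<close>
definition thermo_curve :: "nat \<Rightarrow> (nat \<Rightarrow> real) \<Rightarrow> (nat \<Rightarrow> real) \<Rightarrow> (nat \<Rightarrow> nat) \<Rightarrow> real \<Rightarrow> real" where
  "thermo_curve d \<gamma> p \<pi> x =
     (let X = cum d \<pi> \<gamma>; Y = cum d \<pi> p; k = (LEAST k. x \<le> X k) in
      if k = 0 then 0
      else Y (k - 1) + (x - X (k - 1)) * (Y k - Y (k - 1)) / (X k - X (k - 1)))"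

definition extreme_point :: "nat \<Rightarrow> (nat \<Rightarrow> real) \<Rightarrow> (nat \<Rightarrow> real) \<Rightarrow> (nat \<Rightarrow> nat) \<Rightarrow> (nat \<Rightarrow> nat) \<Rightarrow> nat \<Rightarrow> real" where
  "extreme_point d \<gamma> p \<pi> \<sigma> a =
     (let y = (\<lambda>k. thermo_curve d \<gamma> p \<pi> (cum d \<sigma> \<gamma> k)) in y (\<sigma> a) - y (\<sigma> a - 1))"

definition tvd :: "nat \<Rightarrow> (nat \<Rightarrow> real) \<Rightarrow> (nat \<Rightarrow> real) \<Rightarrow> real" where
  "tvd d p q = (\<Sum>a=1..d. \<bar>p a - q a\<bar>) / 2"

end

(* Give every cell (a, m) of the joint system a position u on the real line, changing in time, such
   that the two cells of each two-level thermalisation of the protocol sit at the same position and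
   the thermalisation moves their mass from u to u + gamma_b / N or u - gamma_i3 / N with
   probabilities that make the step mean-zero.  The mass starting in a cell c then performs a
   martingale, and the supermartingale (u - u_c)^2 - s / (2 N), with s the accumulated step length,
   bounds its final variance by 1 / N.
   Initially the cells of i1, i2, i3 fill adjacent intervals of lengths gamma_i1, gamma_i2,
   gamma_i3 from the top down, with densities p_a / gamma_a; at the end the cells of i3, i1, i2 fill
   adjacent intervals from the top down.  By Chebyshev's inequality the final mass on the top
   interval, and on the top two intervals, is up to O(N^(-1/4)) the initial mass above the same
   points, i.e. a value of the thermomajorisation curve; these values are the extreme point. *)

theory Submission
  imports Defs "HOL-Real_Asymp.Real_Asymp"
begin

section \<open>Grid protocols of two-level thermalisations\<close>

definition grid_protocol :: "(nat \<Rightarrow> real) \<Rightarrow> nat \<Rightarrow> (nat \<Rightarrow> nat) \<Rightarrow> (nat \<Rightarrow> nat)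
    \<Rightarrow> (nat \<Rightarrow> real) \<Rightarrow> nat \<Rightarrow> real" where
  "grid_protocol G N X Y = fold (\<lambda>k. fold (\<lambda>l. therm2 G (X k) (Y l)) [1..<N+1]) [1..<N+1]"

lemma swap_protocol_eq_grid_protocol:
  "swap_protocol G N i j = grid_protocol G N (jidx N j) (jidx N i)"
  unfolding swap_protocol_def[abs_def] round_op_def[abs_def] grid_protocol_def ..

lemma grid_protocol_invariant:
  assumes "P Q"
    and step: "\<And>k l Q. k \<in> {1..N} \<Longrightarrow> l \<in> {1..N} \<Longrightarrow> P Q \<Longrightarrow> P (therm2 G (X k) (Y l) Q)"
  shows "P (grid_protocol G N X Y Q)"
proof -
  have range: "set [1..<N+1] = {1..N}" by auto
  have round: "P (fold (\<lambda>l. therm2 G (X k) (Y l)) [1..<N+1] Q')"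
    if k: "k \<in> {1..N}" and "P Q'" for k Q'
    by (rule fold_invariant[where P=P and xs="[1..<N+1]" and Q="\<lambda>l. l \<in> {1..N}"])
       (simp_all only: range that step[OF k])
  show ?thesis
    unfolding grid_protocol_def
    by (rule fold_invariant[where P=P and xs="[1..<N+1]" and Q="\<lambda>k. k \<in> {1..N}"])
       (simp_all only: range assms(1) round)
qed

lemma therm2_apart: "z \<noteq> x \<Longrightarrow> z \<noteq> y \<Longrightarrow> therm2 G x y Q z = Q z"
  by (simp add: therm2_def)

lemma therm2_nonneg:
  assumes "0 < G x" "0 < G y" "\<And>z. 0 \<le> Q z"
  shows "0 \<le> therm2 G x y Q z"
  using assms by (simp add: therm2_def add_nonneg_nonneg)

lemma fold_nonneg:
  fixes Q :: "nat \<Rightarrow> real"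
  assumes step: "\<And>a Q z. (\<And>z. 0 \<le> Q z) \<Longrightarrow> 0 \<le> f a Q z" and Q: "\<And>z. 0 \<le> Q z"
  shows "0 \<le> fold f xs Q z"
  using Q
proof (induction xs arbitrary: Q)
  case (Cons a xs)
  have "0 \<le> fold f xs (f a Q) z" by (rule Cons.IH) (rule step[OF Cons.prems])
  thus ?case by simp
qed simp

lemma fold_therm2_nonneg:
  assumes "\<And>z. 0 < G z" "\<And>z. 0 \<le> Q z"
  shows "0 \<le> fold (\<lambda>l. therm2 G (x l) (y l)) ls Q z"
  by (rule fold_nonneg) (use assms in \<open>blast intro: therm2_nonneg\<close>)+

lemma grid_protocol_nonneg:
  assumes "\<And>z. 0 < G z" "\<And>z. 0 \<le> Q z"
  shows "0 \<le> grid_protocol G N X Y Q z"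
  unfolding grid_protocol_def
  by (rule fold_nonneg, rule fold_therm2_nonneg, rule assms(1), assumption, rule assms(2))

lemma grid_protocol_apart:
  assumes "z \<notin> X ` {1..N}" "z \<notin> Y ` {1..N}"
  shows "grid_protocol G N X Y Q z = Q z"
proof (rule grid_protocol_invariant[where P="\<lambda>Q'. Q' z = Q z"])
  fix k l Q' assume "k \<in> {1..N}" "l \<in> {1..N}" "Q' z = Q z"
  with assms show "therm2 G (X k) (Y l) Q' z = Q z" by (metis image_eqI therm2_apart)
qed (rule refl)

lemma grid_protocol_fixes:
  assumes "\<And>k. k \<in> {1..N} \<Longrightarrow> R (X k) = 0" "\<And>l. l \<in> {1..N} \<Longrightarrow> R (Y l) = 0"
  shows "grid_protocol G N X Y R = R"
proof (rule grid_protocol_invariant[where P="\<lambda>Q. Q = R"])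
  fix k l Q assume "k \<in> {1..N}" "l \<in> {1..N}" "Q = R"
  with assms show "therm2 G (X k) (Y l) Q = R" by (simp add: therm2_def fun_upd_idem)
qed (rule refl)

definition sum_linear :: "((nat \<Rightarrow> real) \<Rightarrow> nat \<Rightarrow> real) \<Rightarrow> bool" where
  "sum_linear \<Phi> \<longleftrightarrow> (\<forall>(I::nat set) \<alpha> F. finite I \<longrightarrow>
      \<Phi> (\<lambda>z. \<Sum>c\<in>I. \<alpha> c * F c z) = (\<lambda>z. \<Sum>c\<in>I. \<alpha> c * \<Phi> (F c) z))"

lemma sum_linearD:
  fixes I :: "nat set"
  assumes "sum_linear \<Phi>" "finite I"
  shows "\<Phi> (\<lambda>z. \<Sum>c\<in>I. \<alpha> c * F c z) = (\<lambda>z. \<Sum>c\<in>I. \<alpha> c * \<Phi> (F c) z)"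
  using assms(1)[unfolded sum_linear_def, rule_format, OF assms(2)] .

lemma sum_linear_add:
  assumes "sum_linear \<Phi>"
  shows "\<Phi> (\<lambda>z. A z + B z) = (\<lambda>z. \<Phi> A z + \<Phi> B z)"
proof -
  let ?F = "\<lambda>c::nat. if c = 0 then A else B"
  have "\<Phi> (\<lambda>z. \<Sum>c\<in>{0, 1}. 1 * ?F c z) = (\<lambda>z. \<Sum>c\<in>{0, 1}. 1 * \<Phi> (?F c) z)"
    by (rule sum_linearD[OF assms]) simp
  thus ?thesis by simp
qed

lemma sum_linear_comp: "sum_linear \<Phi> \<Longrightarrow> sum_linear \<Psi> \<Longrightarrow> sum_linear (\<lambda>Q. \<Psi> (\<Phi> Q))"
  unfolding sum_linear_def by simp

lemma sum_linear_therm2: "sum_linear (therm2 G x y)"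
  unfolding sum_linear_def
proof (intro allI impI ext)
  fix I :: "nat set" and \<alpha> :: "nat \<Rightarrow> real" and F :: "nat \<Rightarrow> nat \<Rightarrow> real" and z
  have pair: "((\<Sum>c\<in>I. \<alpha> c * F c x) + (\<Sum>c\<in>I. \<alpha> c * F c y)) * t
      = (\<Sum>c\<in>I. \<alpha> c * ((F c x + F c y) * t))" for t
  proof -
    have "(\<Sum>c\<in>I. \<alpha> c * ((F c x + F c y) * t)) = (\<Sum>c\<in>I. \<alpha> c * F c x * t + \<alpha> c * F c y * t)"
      by (rule sum.cong) (auto simp: algebra_simps)
    also have "\<dots> = (\<Sum>c\<in>I. \<alpha> c * F c x) * t + (\<Sum>c\<in>I. \<alpha> c * F c y) * t"
      by (simp add: sum.distrib sum_distrib_right)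
    finally show ?thesis by (simp add: algebra_simps)
  qed
  have unfold: "therm2 G x y Q
      = Q(x := (Q x + Q y) * (G x / (G x + G y)), y := (Q x + Q y) * (G y / (G x + G y)))" for Q
    by (simp add: therm2_def)
  show "therm2 G x y (\<lambda>z. \<Sum>c\<in>I. \<alpha> c * F c z) z = (\<Sum>c\<in>I. \<alpha> c * therm2 G x y (F c) z)"
    unfolding unfold by (cases "z = y"; cases "z = x") (simp_all add: pair sum_divide_distrib)
qed

lemma sum_linear_fold: "(\<And>a. a \<in> set xs \<Longrightarrow> sum_linear (f a)) \<Longrightarrow> sum_linear (fold f xs)"
proof (induction xs)
  case Nil
  thus ?case by (simp add: sum_linear_def)
next
  case (Cons a xs)
  have "sum_linear (\<lambda>Q. fold f xs (f a Q))" by (rule sum_linear_comp) (use Cons in auto)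
  thus ?case by simp
qed

lemma sum_linear_grid_protocol: "sum_linear (grid_protocol G N X Y)"
  unfolding grid_protocol_def by (intro sum_linear_fold sum_linear_therm2)

lemma therm2_weighted_sum:
  assumes C: "finite C" "x \<in> C" "y \<in> C" "x \<noteq> y"
    and same: "\<And>z. z \<in> C \<Longrightarrow> z \<noteq> x \<Longrightarrow> z \<noteq> y \<Longrightarrow> W1 z = W0 z"
    and w0: "W0 x = w0" "W0 y = w0"
  shows "(\<Sum>z\<in>C. therm2 G x y Q z * W1 z) = (\<Sum>z\<in>C. Q z * W0 z)
           + (Q x + Q y) * ((G x * W1 x + G y * W1 y) / (G x + G y) - w0)"
proof -
  let ?D = "C - {x} - {y}"
  have y: "y \<in> C - {x}" using C by auto
  have split: "(\<Sum>z\<in>C. f z) = f x + (f y + (\<Sum>z\<in>?D. f z))" for f :: "nat \<Rightarrow> real"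
    using sum.remove[OF C(1) C(2), of f] sum.remove[OF _ y, of f] C(1) by simp
  have rest: "(\<Sum>z\<in>?D. therm2 G x y Q z * W1 z) = (\<Sum>z\<in>?D. Q z * W0 z)"
    by (rule sum.cong) (auto simp: therm2_apart same)
  define T where "T = (G x * W1 x + G y * W1 y) / (G x + G y)"
  have pair: "(Q x + Q y) * G x / (G x + G y) * W1 x + (Q x + Q y) * G y / (G x + G y) * W1 y
      = (Q x + Q y) * T"
    unfolding T_def add_divide_distrib by (simp add: algebra_simps)
  have at_xy: "therm2 G x y Q x = (Q x + Q y) * G x / (G x + G y)"
    "therm2 G x y Q y = (Q x + Q y) * G y / (G x + G y)"
    using C(4) by (auto simp: therm2_def)
  have "(\<Sum>z\<in>C. therm2 G x y Q z * W1 z) = (Q x + Q y) * T + (\<Sum>z\<in>?D. Q z * W0 z)"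
    unfolding split rest at_xy pair[symmetric] by simp
  also have "\<dots> = (\<Sum>z\<in>C. Q z * W0 z) + (Q x + Q y) * (T - w0)"
    unfolding split using w0 by (simp add: algebra_simps)
  finally show ?thesis unfolding T_def .
qed

lemma grid_protocol_potential_mono:
  fixes W :: "nat \<Rightarrow> nat \<Rightarrow> nat \<Rightarrow> real"
  assumes step: "\<And>K L Q. K < N \<Longrightarrow> L < N \<Longrightarrow> (\<And>z. 0 \<le> Q z) \<Longrightarrow>
      (\<Sum>z\<in>C. therm2 G (X (Suc K)) (Y (Suc L)) Q z * W K (Suc L) z) \<le> (\<Sum>z\<in>C. Q z * W K L z)"
    and junction: "\<And>K z. K < N \<Longrightarrow> z \<in> C \<Longrightarrow> W K N z = W (Suc K) 0 z"
    and G: "\<And>z. 0 < G z" and Q: "\<And>z. 0 \<le> Q z"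
  shows "(\<Sum>z\<in>C. grid_protocol G N X Y Q z * W N 0 z) \<le> (\<Sum>z\<in>C. Q z * W 0 0 z)"
proof -
  let ?round = "\<lambda>k. fold (\<lambda>l. therm2 G (X k) (Y l)) [1..<N+1]"
  have inner: "(\<Sum>z\<in>C. fold (\<lambda>l. therm2 G (X (Suc K)) (Y l)) [1..<L+1] Q' z * W K L z)
      \<le> (\<Sum>z\<in>C. Q' z * W K 0 z)"
    if "K < N" "L \<le> N" "\<And>z. 0 \<le> Q' z" for K L Q'
    using that(2)
  proof (induction L)
    case (Suc L)
    let ?Q = "fold (\<lambda>l. therm2 G (X (Suc K)) (Y l)) [1..<L+1] Q'"
    have nonneg: "0 \<le> ?Q z" for z by (rule fold_therm2_nonneg[OF G that(3)])
    have "(\<Sum>z\<in>C. therm2 G (X (Suc K)) (Y (Suc L)) ?Q z * W K (Suc L) z) \<le> (\<Sum>z\<in>C. ?Q z * W K L z)"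
      by (rule step[OF that(1) _ nonneg]) (use Suc.prems in simp)
    also have "\<dots> \<le> (\<Sum>z\<in>C. Q' z * W K 0 z)" using Suc by simp
    finally show ?case by simp
  qed simp
  have outer: "(\<Sum>z\<in>C. fold ?round [1..<K+1] Q z * W K 0 z) \<le> (\<Sum>z\<in>C. Q z * W 0 0 z)"
    if "K \<le> N" for K
    using that
  proof (induction K)
    case (Suc K)
    let ?Q = "fold ?round [1..<K+1] Q"
    have nonneg: "0 \<le> ?Q z" for z
      by (rule fold_nonneg, rule fold_therm2_nonneg, rule G, assumption, rule Q)
    have "(\<Sum>z\<in>C. fold ?round [1..<Suc K+1] Q z * W (Suc K) 0 z)
        = (\<Sum>z\<in>C. ?round (Suc K) ?Q z * W K N z)"
      using Suc.prems by (intro sum.cong) (auto simp: junction)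
    also have "\<dots> \<le> (\<Sum>z\<in>C. ?Q z * W K 0 z)"
      by (rule inner) (use Suc.prems nonneg in auto)
    also have "\<dots> \<le> (\<Sum>z\<in>C. Q z * W 0 0 z)" by (rule Suc.IH) (use Suc.prems in simp)
    finally show ?case .
  qed simp
  show ?thesis using outer[of N] unfolding grid_protocol_def by simp
qed

section \<open>Joint indices\<close>

definition mem_level :: "nat \<Rightarrow> nat \<Rightarrow> nat" where
  "mem_level N x = (x - 1) mod N + 1"

lemma jidx_minus_one: "1 \<le> a \<Longrightarrow> m \<in> {1..N} \<Longrightarrow> jidx N a m - 1 = (m - 1) + N * (a - 1)"
  by (simp add: jidx_def algebra_simps)

lemma sys_level_jidx:
  assumes "1 \<le> a" "m \<in> {1..N}"
  shows "sys_level N (jidx N a m) = a"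
proof -
  have "N \<noteq> 0" using assms(2) by auto
  hence "(jidx N a m - 1) div N = a - 1"
    unfolding jidx_minus_one[OF assms] div_mult_self2[OF \<open>N \<noteq> 0\<close>]
    using assms(2) by (subst div_less) auto
  thus ?thesis unfolding sys_level_def using assms(1) by simp
qed

lemma mem_level_jidx:
  assumes "1 \<le> a" "m \<in> {1..N}"
  shows "mem_level N (jidx N a m) = m"
proof -
  have "(jidx N a m - 1) mod N = m - 1"
    unfolding jidx_minus_one[OF assms] mod_mult_self2 using assms(2) by (subst mod_less) auto
  thus ?thesis unfolding mem_level_def using assms(2) by simp
qed

lemma jidx_eq_iff:
  "1 \<le> a \<Longrightarrow> m \<in> {1..N} \<Longrightarrow> 1 \<le> a' \<Longrightarrow> m' \<in> {1..N} \<Longrightarrow>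
     jidx N a m = jidx N a' m' \<longleftrightarrow> a = a' \<and> m = m'"
  by (metis sys_level_jidx mem_level_jidx)

lemma tensor_eta_jidx:
  assumes "a \<in> {1..d}" "m \<in> {1..N}"
  shows "tensor_eta d N q (jidx N a m) = q a / real N"
proof -
  have "(a - 1) * N + m \<le> (d - 1) * N + N" using assms by (intro add_mono mult_right_mono) auto
  also have "\<dots> = d * N" using assms by (cases d) auto
  finally have "jidx N a m \<in> {1..d * N}" using assms unfolding jidx_def by auto
  thus ?thesis unfolding tensor_eta_def using sys_level_jidx[of a m N] assms by auto
qed

lemma marginal_tensor_eta: "a \<in> {1..d} \<Longrightarrow> 1 \<le> N \<Longrightarrow> marginal N (tensor_eta d N q) a = q a"
  unfolding marginal_def by (simp add: tensor_eta_jidx)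

lemma mem_therm_eq_tensor_eta_marginal:
  assumes "1 \<le> N"
  shows "mem_therm d N Q = tensor_eta d N (marginal N (mem_therm d N Q))"
proof
  fix x
  let ?q = "marginal N Q"
  show "mem_therm d N Q x = tensor_eta d N (marginal N (mem_therm d N Q)) x"
  proof (cases "1 \<le> x \<and> x \<le> d * N")
    case True
    have "(x - 1) div N < d" using True by (intro less_mult_imp_div_less) auto
    hence "sys_level N x \<in> {1..d}" unfolding sys_level_def by auto
    hence "marginal N (tensor_eta d N ?q) (sys_level N x) = ?q (sys_level N x)"
      using assms by (rule marginal_tensor_eta)
    thus ?thesis using True unfolding mem_therm_def by (simp add: tensor_eta_def)
  qed (auto simp: mem_therm_def tensor_eta_def)
qed

section \<open>Ramps and counting grid points\<close>

definition ramp :: "real \<Rightarrow> real \<Rightarrow> real" where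
  "ramp L v = max 0 (min L v)"

lemma ramp_lipschitz: "\<bar>ramp L v - ramp L v'\<bar> \<le> \<bar>v - v'\<bar>"
  unfolding ramp_def by (auto simp: max_def min_def)

lemma abs_mult_diff_le:
  fixes c S R k :: real
  assumes "0 \<le> c" "\<bar>S - R\<bar> \<le> k"
  shows "\<bar>c * S - c * R\<bar> \<le> c * k"
proof -
  have "\<bar>c * S - c * R\<bar> = c * \<bar>S - R\<bar>"
    using assms(1) by (simp add: right_diff_distrib[symmetric] abs_mult)
  thus ?thesis using assms by (simp add: mult_left_mono)
qed

lemma grid_count_above:
  fixes h c t :: real
  assumes h: "0 < h"
  shows "\<bar>(\<Sum>m=1..N. if t < c + real (m - 1) * h then h else 0) - ramp (real N * h) (c + real N * h - t)\<bar>
           \<le> h"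
proof -
  define S where "S n = (\<Sum>m=1..n. if t < c + real (m - 1) * h then h else 0)" for n
  have "S n \<le> ramp (real n * h) (c + real n * h - t)
      \<and> ramp (real n * h) (c + real n * h - t) \<le> S n + (if t < c + real n * h then h else 0)" for n
  proof (induction n)
    case 0
    thus ?case using h by (simp add: S_def ramp_def)
  next
    case (Suc n)
    have S_Suc: "S (Suc n) = S n + (if t < c + real n * h then h else 0)" unfolding S_def by simp
    have "0 \<le> S n" unfolding S_def by (rule sum_nonneg) (use h in auto)
    moreover have "real (Suc n) * h = real n * h + h" by (simp add: algebra_simps)
    moreover have "0 \<le> real n * h" using h by simp
    ultimately show ?case using Suc.IH h unfolding S_Suc
      by (simp only:) (auto simp: ramp_def max_def min_def split: if_splits)
  qed
  thus ?thesis using h unfolding S_def by (smt (verit))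
qed

lemma grid_count_above_reflected:
  fixes h t :: real
  assumes h: "0 < h"
  shows "\<bar>(\<Sum>m=1..N. if t < - (real (m - 1) * h) then h else 0) - ramp (real N * h) (- t)\<bar> \<le> 2 * h"
proof -
  have "(\<Sum>m=1..N. if t < - (real (m - 1) * h) then h else 0)
      = (\<Sum>m=1..N. if t < (h - real N * h) + real (m - 1) * h then h else 0)"
    by (subst sum.atLeastAtMost_rev) (intro sum.cong refl, auto simp: of_nat_diff algebra_simps)
  moreover have "\<bar>ramp (real N * h) (h - t) - ramp (real N * h) (- t)\<bar> \<le> h"
    using ramp_lipschitz[of "real N * h" "h - t" "- t"] h by simp
  ultimately show ?thesis
    using grid_count_above[OF h, of t "h - real N * h" N] by simp
qed

(* The thermomajorisation curve of p restricted to the levels i1, i2, i3, taken in this order. *)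
definition top_mass :: "(nat \<Rightarrow> real) \<Rightarrow> (nat \<Rightarrow> real) \<Rightarrow> nat \<Rightarrow> nat \<Rightarrow> nat \<Rightarrow> real \<Rightarrow> real" where
  "top_mass \<gamma> p i1 i2 i3 \<tau> = p i1 / \<gamma> i1 * ramp (\<gamma> i1) \<tau> + p i2 / \<gamma> i2 * ramp (\<gamma> i2) (\<tau> - \<gamma> i1)
     + p i3 / \<gamma> i3 * ramp (\<gamma> i3) (\<tau> - \<gamma> i1 - \<gamma> i2)"

lemma top_mass_lipschitz:
  assumes "\<And>a. 0 < \<gamma> a" "0 \<le> p i1" "0 \<le> p i2" "0 \<le> p i3"
  shows "\<bar>top_mass \<gamma> p i1 i2 i3 \<tau> - top_mass \<gamma> p i1 i2 i3 \<tau>'\<bar>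
           \<le> (p i1 / \<gamma> i1 + p i2 / \<gamma> i2 + p i3 / \<gamma> i3) * \<bar>\<tau> - \<tau>'\<bar>"
proof -
  have scaled: "\<bar>p a / \<gamma> a * ramp L v - p a / \<gamma> a * ramp L v'\<bar> \<le> p a / \<gamma> a * \<bar>\<tau> - \<tau>'\<bar>"
    if "0 \<le> p a" "v - v' = \<tau> - \<tau>'" for a L v v'
    using that assms(1)[of a] ramp_lipschitz[of L v v'] by (intro abs_mult_diff_le) simp_all
  have "\<bar>p i1 / \<gamma> i1 * ramp (\<gamma> i1) \<tau> - p i1 / \<gamma> i1 * ramp (\<gamma> i1) \<tau>'\<bar> \<le> p i1 / \<gamma> i1 * \<bar>\<tau> - \<tau>'\<bar>"
    "\<bar>p i2 / \<gamma> i2 * ramp (\<gamma> i2) (\<tau> - \<gamma> i1) - p i2 / \<gamma> i2 * ramp (\<gamma> i2) (\<tau>' - \<gamma> i1)\<bar>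
       \<le> p i2 / \<gamma> i2 * \<bar>\<tau> - \<tau>'\<bar>"
    "\<bar>p i3 / \<gamma> i3 * ramp (\<gamma> i3) (\<tau> - \<gamma> i1 - \<gamma> i2) - p i3 / \<gamma> i3 * ramp (\<gamma> i3) (\<tau>' - \<gamma> i1 - \<gamma> i2)\<bar>
       \<le> p i3 / \<gamma> i3 * \<bar>\<tau> - \<tau>'\<bar>"
    by (rule scaled; simp add: assms(2-4))+
  thus ?thesis unfolding top_mass_def by (simp add: algebra_simps) linarith
qed

section \<open>A martingale on the cells of three levels\<close>

(* w (u, s) is superharmonic for the walk stepping from u to u + a with probability b / (a + b)
   and to u - b with probability a / (a + b), while s grows by the length of the step. *)
definition walk_superharmonic :: "real \<Rightarrow> real \<Rightarrow> (real \<Rightarrow> real \<Rightarrow> real) \<Rightarrow> bool" where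
  "walk_superharmonic a b w \<longleftrightarrow>
     (\<forall>u s. b * w (u + a) (s + a) + a * w (u - b) (s + b) \<le> (a + b) * w u s)"

lemma walk_superharmonic_const: "walk_superharmonic a b (\<lambda>u s. k)"
  by (simp add: walk_superharmonic_def algebra_simps)

lemma walk_superharmonic_quadratic:
  assumes "0 < a" "0 < b" "a + b \<le> 2 * \<kappa>"
  shows "walk_superharmonic a b (\<lambda>u s. (u - c)\<^sup>2 - \<kappa> * s)"
  unfolding walk_superharmonic_def
proof (intro allI)
  fix u s
  have "b * ((u + a - c)\<^sup>2 - \<kappa> * (s + a)) + a * ((u - b - c)\<^sup>2 - \<kappa> * (s + b))
      = (a + b) * ((u - c)\<^sup>2 - \<kappa> * s) + a * b * (a + b - 2 * \<kappa>)"
    by (simp add: power2_eq_square algebra_simps)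
  moreover have "a * b * (a + b - 2 * \<kappa>) \<le> 0"
    using assms by (simp add: mult_nonneg_nonpos)
  ultimately show "b * ((u + a - c)\<^sup>2 - \<kappa> * (s + a)) + a * ((u - b - c)\<^sup>2 - \<kappa> * (s + b))
      \<le> (a + b) * ((u - c)\<^sup>2 - \<kappa> * s)" by simp
qed

lemma sum_delta_mult:
  assumes "finite A" "c \<in> A"
  shows "(\<Sum>z\<in>A. (if z = c then 1 else 0) * f z) = (f c :: real)"
proof -
  have "(\<Sum>z\<in>A. (if z = c then 1 else 0) * f z) = (\<Sum>z\<in>A. if z = c then f z else 0)"
    by (rule sum.cong) auto
  thus ?thesis using assms by simp
qed

lemma mixture_bounds:
  fixes f Q :: "nat \<Rightarrow> real"
  assumes "finite A" and Q: "\<And>c. c \<in> A \<Longrightarrow> 0 \<le> Q c" and Q_sum: "(\<Sum>c\<in>A. Q c) \<le> 1"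
    and f: "\<And>c. c \<in> A \<Longrightarrow> 0 \<le> f c \<and> f c \<le> 1" and \<epsilon>: "0 \<le> \<epsilon>"
    and hi: "\<And>c. c \<in> A \<Longrightarrow> P c \<Longrightarrow> 1 - \<epsilon> \<le> f c"
    and lo: "\<And>c. c \<in> A \<Longrightarrow> \<not> P' c \<Longrightarrow> f c \<le> \<epsilon>"
  shows "(\<Sum>c\<in>A. if P c then Q c else 0) - \<epsilon> \<le> (\<Sum>c\<in>A. Q c * f c)"
    and "(\<Sum>c\<in>A. Q c * f c) \<le> (\<Sum>c\<in>A. if P' c then Q c else 0) + \<epsilon>"
proof -
  let ?S = "\<Sum>c\<in>A. if P c then Q c else 0"
  have "?S \<le> 1"
    using Q_sum by (rule order_trans[rotated]) (rule sum_mono, use Q in auto)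
  hence "\<epsilon> * ?S \<le> \<epsilon>" using \<epsilon> by (simp add: mult_left_le)
  moreover have "?S - \<epsilon> * ?S = (\<Sum>c\<in>A. if P c then Q c * (1 - \<epsilon>) else 0)"
    by (simp add: sum_distrib_left sum_subtractf[symmetric] if_distrib algebra_simps)
       (rule sum.cong, auto simp: algebra_simps)
  moreover have "\<dots> \<le> (\<Sum>c\<in>A. Q c * f c)"
    by (rule sum_mono) (use Q f hi in \<open>auto intro: mult_left_mono mult_nonneg_nonneg\<close>)
  ultimately show "?S - \<epsilon> \<le> (\<Sum>c\<in>A. Q c * f c)" by linarith
  have "Q c * f c \<le> (if P' c then Q c else 0) + \<epsilon> * Q c" if c: "c \<in> A" for c
  proof (cases "P' c")
    case True
    have "Q c * f c \<le> Q c" using Q[OF c] f[OF c] by (simp add: mult_left_le)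
    thus ?thesis using True mult_nonneg_nonneg[OF \<epsilon> Q[OF c]] by simp
  next
    case False
    have "Q c * f c \<le> Q c * \<epsilon>" using Q[OF c] lo[OF c False] by (rule mult_left_mono[rotated])
    thus ?thesis using False by (simp add: mult.commute)
  qed
  hence "(\<Sum>c\<in>A. Q c * f c) \<le> (\<Sum>c\<in>A. (if P' c then Q c else 0) + \<epsilon> * Q c)"
    by (rule sum_mono)
  also have "\<dots> \<le> (\<Sum>c\<in>A. if P' c then Q c else 0) + \<epsilon>"
    using Q_sum \<epsilon> by (simp add: sum.distrib sum_distrib_left[symmetric] mult_left_le)
  finally show "(\<Sum>c\<in>A. Q c * f c) \<le> (\<Sum>c\<in>A. if P' c then Q c else 0) + \<epsilon>" .
qed

locale three_level_walk =
  fixes N :: nat and i1 i2 i3 :: nat and \<gamma> G :: "nat \<Rightarrow> real"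
  assumes N_pos: "1 \<le> N" and distinct: "i1 \<noteq> i2" "i2 \<noteq> i3" "i1 \<noteq> i3"
    and levels_pos: "1 \<le> i1" "1 \<le> i2" "1 \<le> i3"
    and gamma_pos: "\<And>a. 0 < \<gamma> a"
    and gamma13: "\<gamma> i1 + \<gamma> i3 \<le> 1" and gamma23: "\<gamma> i2 + \<gamma> i3 \<le> 1"
    and G_pos: "\<And>z. 0 < G z"
    and G_jidx: "\<And>a m. 1 \<le> a \<Longrightarrow> m \<in> {1..N} \<Longrightarrow> G (jidx N a m) = \<gamma> a / N"
begin

definition mesh :: "nat \<Rightarrow> real" where "mesh a = \<gamma> a / N"

lemma mesh_pos: "0 < mesh a"
  unfolding mesh_def using gamma_pos N_pos by simp

lemma N_mesh: "real N * mesh a = \<gamma> a"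
  unfolding mesh_def using N_pos by simp

lemma mesh_offset_bounds:
  assumes "m \<in> {1..N}"
  shows "0 \<le> real (m - 1) * mesh a" "real (m - 1) * mesh a \<le> \<gamma> a - mesh a"
proof -
  show "0 \<le> real (m - 1) * mesh a" using mesh_pos[of a] by simp
  have "real (m - 1) \<le> real N - 1" using assms by auto
  hence "real (m - 1) * mesh a \<le> (real N - 1) * mesh a"
    by (rule mult_right_mono) (use mesh_pos[of a] in simp)
  thus "real (m - 1) * mesh a \<le> \<gamma> a - mesh a" using N_mesh[of a] by (simp add: algebra_simps)
qed

definition level_cells :: "nat \<Rightarrow> nat set" where
  "level_cells a = jidx N a ` {1..N}"

definition cells :: "nat set" where
  "cells = level_cells i1 \<union> level_cells i2 \<union> level_cells i3"

lemma finite_level_cells: "finite (level_cells a)"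
  unfolding level_cells_def by simp

lemma finite_cells: "finite cells"
  unfolding cells_def by (simp add: finite_level_cells)

lemma level_cellsE:
  assumes "z \<in> level_cells a"
  obtains m where "m \<in> {1..N}" "z = jidx N a m"
  using assms unfolding level_cells_def by auto

lemma cellsE:
  assumes "z \<in> cells"
  obtains a m where "a \<in> {i1, i2, i3}" "m \<in> {1..N}" "z = jidx N a m"
  using assms that unfolding cells_def level_cells_def by blast

lemma jidx_in_cells: "a \<in> {i1, i2, i3} \<Longrightarrow> m \<in> {1..N} \<Longrightarrow> jidx N a m \<in> cells"
  unfolding cells_def level_cells_def by auto

lemma levels_jidx:
  "a \<in> {i1, i2, i3} \<Longrightarrow> m \<in> {1..N} \<Longrightarrow>
     sys_level N (jidx N a m) = a \<and> mem_level N (jidx N a m) = m"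
  using sys_level_jidx mem_level_jidx levels_pos by auto

lemma sum_level_cells: "1 \<le> a \<Longrightarrow> (\<Sum>z\<in>level_cells a. g z) = (\<Sum>m=1..N. g (jidx N a m))"
proof -
  assume "1 \<le> a"
  hence "inj_on (jidx N a) {1..N}" by (intro inj_onI) (simp add: jidx_eq_iff)
  thus ?thesis unfolding level_cells_def by (simp add: sum.reindex)
qed

lemma level_cells_disjoint: "1 \<le> a \<Longrightarrow> 1 \<le> b \<Longrightarrow> a \<noteq> b \<Longrightarrow> level_cells a \<inter> level_cells b = {}"
  unfolding level_cells_def using jidx_eq_iff[of a _ N b] by auto

lemma sum_cells:
  "(\<Sum>z\<in>cells. g z) = (\<Sum>z\<in>level_cells i1. g z) + (\<Sum>z\<in>level_cells i2. g z) + (\<Sum>z\<in>level_cells i3. g z)"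
  unfolding cells_def using levels_pos distinct
  by (simp add: sum.union_disjoint finite_level_cells level_cells_disjoint Int_Un_distrib2)

(* Coordinates of the cells during the swap of the i3-cells with the b-cells, at stage (K, L):
   after K complete rounds and L further thermalisations.  An i3-cell moves by mesh b in x each
   time it meets a b-cell (cell m has met met_count K L m of them), a b-cell moves by mesh i3 in y
   each time it meets an i3-cell.  The two cells of the next thermalisation always share
   u = x - y; afterwards u has moved by + mesh b or - mesh i3 with probabilities proportional to
   mesh i3 and mesh b, a mean-zero step, and s = x + y has grown by the length of the step. *)
definition met_count :: "nat \<Rightarrow> nat \<Rightarrow> nat \<Rightarrow> nat" where
  "met_count K L m = (if m \<le> K then N else if m = Suc K then L else 0)"

definition coord_x :: "nat \<Rightarrow> real \<Rightarrow> (nat \<Rightarrow> real) \<Rightarrow> nat \<Rightarrow> nat \<Rightarrow> nat \<Rightarrow> nat \<Rightarrow> real" where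
  "coord_x b x0 xo K L a m =
     (if a = b then x0 + real (m - 1) * mesh b
      else if a = i3 then x0 + real (met_count K L m) * mesh b else xo m)"

definition coord_y :: "nat \<Rightarrow> (nat \<Rightarrow> real) \<Rightarrow> nat \<Rightarrow> nat \<Rightarrow> nat \<Rightarrow> nat \<Rightarrow> real" where
  "coord_y b yo K L a m =
     (if a = b then real (K + (if m \<le> L then 1 else 0)) * mesh i3
      else if a = i3 then real (m - 1) * mesh i3 else yo m)"

definition stage_weight ::
    "(real \<Rightarrow> real \<Rightarrow> real) \<Rightarrow> nat \<Rightarrow> real \<Rightarrow> (nat \<Rightarrow> real) \<Rightarrow> (nat \<Rightarrow> real)
       \<Rightarrow> nat \<Rightarrow> nat \<Rightarrow> nat \<Rightarrow> real" where
  "stage_weight w b x0 xo yo K L z =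
     w (coord_x b x0 xo K L (sys_level N z) (mem_level N z)
          - coord_y b yo K L (sys_level N z) (mem_level N z))
       (coord_x b x0 xo K L (sys_level N z) (mem_level N z)
          + coord_y b yo K L (sys_level N z) (mem_level N z))"

lemma stage_step:
  assumes b: "b = i1 \<or> b = i2" and w: "walk_superharmonic (mesh b) (mesh i3) w"
    and KL: "K < N" "L < N" and Q: "\<And>z. 0 \<le> Q z"
  shows "(\<Sum>z\<in>cells. therm2 G (jidx N i3 (Suc K)) (jidx N b (Suc L)) Q z
                         * stage_weight w b x0 xo yo K (Suc L) z)
         \<le> (\<Sum>z\<in>cells. Q z * stage_weight w b x0 xo yo K L z)"
proof -
  let ?x = "jidx N i3 (Suc K)" and ?y = "jidx N b (Suc L)"
  let ?W0 = "stage_weight w b x0 xo yo K L" and ?W1 = "stage_weight w b x0 xo yo K (Suc L)"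
  have b3: "b \<noteq> i3" "1 \<le> b" "b \<in> {i1, i2, i3}" using b distinct levels_pos by auto
  have KL1: "Suc K \<in> {1..N}" "Suc L \<in> {1..N}" using KL by auto
  have xy: "?x \<noteq> ?y" using jidx_eq_iff[of i3 "Suc K" N b "Suc L"] KL1 b3 levels_pos by auto
  have lx: "sys_level N ?x = i3" "mem_level N ?x = Suc K" using levels_jidx[of i3 "Suc K"] KL1 by auto
  have ly: "sys_level N ?y = b" "mem_level N ?y = Suc L" using levels_jidx[of b "Suc L"] KL1 b3 by auto
  define u where "u = x0 + real L * mesh b - real K * mesh i3"
  define s where "s = x0 + real L * mesh b + real K * mesh i3"
  have same: "?W1 z = ?W0 z" if z: "z \<in> cells" "z \<noteq> ?x" "z \<noteq> ?y" for z
  proof -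
    obtain a m where am: "a \<in> {i1, i2, i3}" "m \<in> {1..N}" "z = jidx N a m" using z(1) by (rule cellsE)
    have "a \<noteq> i3 \<or> m \<noteq> Suc K" "a \<noteq> b \<or> m \<noteq> Suc L" using z(2,3) am by auto
    thus ?thesis using levels_jidx[OF am(1,2)] am(3)
      unfolding stage_weight_def coord_x_def coord_y_def met_count_def by auto
  qed
  have W0: "?W0 ?x = w u s" "?W0 ?y = w u s"
    unfolding stage_weight_def lx ly coord_x_def coord_y_def met_count_def u_def s_def using b3 by simp_all
  have W1: "?W1 ?x = w (u + mesh b) (s + mesh b)" "?W1 ?y = w (u - mesh i3) (s + mesh i3)"
    unfolding stage_weight_def lx ly coord_x_def coord_y_def met_count_def u_def s_def using b3
    by (simp_all add: algebra_simps)
  have G: "G ?x = mesh i3" "G ?y = mesh b" using G_jidx KL1 b3 levels_pos unfolding mesh_def by auto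
  have "mesh i3 * w (u + mesh b) (s + mesh b) + mesh b * w (u - mesh i3) (s + mesh i3)
      \<le> (mesh i3 + mesh b) * w u s"
    using w unfolding walk_superharmonic_def by (metis add.commute)
  hence "(G ?x * ?W1 ?x + G ?y * ?W1 ?y) / (G ?x + G ?y) \<le> w u s"
    unfolding G W1 using mesh_pos[of b] mesh_pos[of i3] by (simp add: pos_divide_le_eq mult.commute)
  moreover have "0 \<le> Q ?x + Q ?y" using Q by (simp add: add_nonneg_nonneg)
  ultimately show ?thesis
    using therm2_weighted_sum[OF finite_cells jidx_in_cells jidx_in_cells xy same W0, of G Q] KL1 b3
    by (simp add: mult_nonneg_nonpos)
qed

lemma stage_junction:
  assumes "K < N" "z \<in> cells"
  shows "stage_weight w b x0 xo yo K N z = stage_weight w b x0 xo yo (Suc K) 0 z"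
proof -
  obtain a m where am: "a \<in> {i1, i2, i3}" "m \<in> {1..N}" "z = jidx N a m" using assms(2) by (rule cellsE)
  have "sys_level N z = a" "mem_level N z = m" using levels_jidx[OF am(1,2)] am(3) by auto
  thus ?thesis using am(2)
    unfolding stage_weight_def coord_x_def coord_y_def met_count_def by (auto simp: ac_simps)
qed

lemma swap_potential_mono:
  assumes "b = i1 \<or> b = i2" "walk_superharmonic (mesh b) (mesh i3) w" "\<And>z. 0 \<le> Q z"
  shows "(\<Sum>z\<in>cells. grid_protocol G N (jidx N i3) (jidx N b) Q z * stage_weight w b x0 xo yo N 0 z)
           \<le> (\<Sum>z\<in>cells. Q z * stage_weight w b x0 xo yo 0 0 z)"
  by (rule grid_protocol_potential_mono)
     (auto intro: stage_step[OF assms(1,2)] stage_junction G_pos assms(3))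

definition protocol :: "(nat \<Rightarrow> real) \<Rightarrow> nat \<Rightarrow> real" where
  "protocol Q =
     grid_protocol G N (jidx N i3) (jidx N i1) (grid_protocol G N (jidx N i3) (jidx N i2) Q)"

definition phase1_weight :: "(real \<Rightarrow> real \<Rightarrow> real) \<Rightarrow> nat \<Rightarrow> nat \<Rightarrow> nat \<Rightarrow> real" where
  "phase1_weight w = stage_weight w i2 0 (\<lambda>m. \<gamma> i2 + real (m - 1) * mesh i1) (\<lambda>_. 0)"

definition phase2_weight :: "(real \<Rightarrow> real \<Rightarrow> real) \<Rightarrow> nat \<Rightarrow> nat \<Rightarrow> nat \<Rightarrow> real" where
  "phase2_weight w = stage_weight w i1 (\<gamma> i2) (\<lambda>m. real (m - 1) * mesh i2) (\<lambda>_. \<gamma> i3)"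

lemma phase_junction: "z \<in> cells \<Longrightarrow> phase2_weight w 0 0 z = phase1_weight w N 0 z"
proof -
  assume "z \<in> cells"
  then obtain a m where am: "a \<in> {i1, i2, i3}" "m \<in> {1..N}" "z = jidx N a m" by (rule cellsE)
  have "sys_level N z = a" "mem_level N z = m" using levels_jidx[OF am(1,2)] am(3) by auto
  thus ?thesis
    unfolding phase1_weight_def phase2_weight_def stage_weight_def coord_x_def coord_y_def met_count_def
    using am(1,2) distinct by (auto simp: N_mesh)
qed

definition on_levels :: "(nat \<Rightarrow> real) \<Rightarrow> (nat \<Rightarrow> real) \<Rightarrow> (nat \<Rightarrow> real) \<Rightarrow> nat \<Rightarrow> real" where
  "on_levels f1 f2 f3 z =
     (if sys_level N z = i1 then f1 (mem_level N z)
      else if sys_level N z = i2 then f2 (mem_level N z) else f3 (mem_level N z))"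

lemma on_levels_jidx:
  assumes "m \<in> {1..N}"
  shows "on_levels f1 f2 f3 (jidx N i1 m) = f1 m" "on_levels f1 f2 f3 (jidx N i2 m) = f2 m"
    "on_levels f1 f2 f3 (jidx N i3 m) = f3 m"
  using levels_jidx[OF _ assms] distinct unfolding on_levels_def by auto

definition u_init :: "nat \<Rightarrow> real" where
  "u_init = on_levels (\<lambda>m. \<gamma> i2 + real (m - 1) * mesh i1) (\<lambda>m. real (m - 1) * mesh i2)
              (\<lambda>m. - real (m - 1) * mesh i3)"

definition s_init :: "nat \<Rightarrow> real" where
  "s_init = on_levels (\<lambda>m. \<gamma> i2 + real (m - 1) * mesh i1) (\<lambda>m. real (m - 1) * mesh i2)
              (\<lambda>m. real (m - 1) * mesh i3)"

definition u_final :: "nat \<Rightarrow> real" where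
  "u_final = on_levels (\<lambda>m. \<gamma> i2 + real (m - 1) * mesh i1 - \<gamma> i3)
               (\<lambda>m. real (m - 1) * mesh i2 - \<gamma> i3) (\<lambda>m. \<gamma> i1 + \<gamma> i2 - real (m - 1) * mesh i3)"

definition s_final :: "nat \<Rightarrow> real" where
  "s_final = on_levels (\<lambda>m. \<gamma> i2 + real (m - 1) * mesh i1 + \<gamma> i3)
               (\<lambda>m. real (m - 1) * mesh i2 + \<gamma> i3) (\<lambda>m. \<gamma> i1 + \<gamma> i2 + real (m - 1) * mesh i3)"

lemma phase1_weight_init: "z \<in> cells \<Longrightarrow> phase1_weight w 0 0 z = w (u_init z) (s_init z)"
proof -
  assume "z \<in> cells"
  then obtain a m where am: "a \<in> {i1, i2, i3}" "m \<in> {1..N}" "z = jidx N a m" by (rule cellsE)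
  have "sys_level N z = a" "mem_level N z = m" using levels_jidx[OF am(1,2)] am(3) by auto
  thus ?thesis using am distinct on_levels_jidx[OF am(2)]
    unfolding phase1_weight_def stage_weight_def coord_x_def coord_y_def met_count_def
      u_init_def s_init_def by auto
qed

lemma phase2_weight_final: "z \<in> cells \<Longrightarrow> phase2_weight w N 0 z = w (u_final z) (s_final z)"
proof -
  assume "z \<in> cells"
  then obtain a m where am: "a \<in> {i1, i2, i3}" "m \<in> {1..N}" "z = jidx N a m" by (rule cellsE)
  have "sys_level N z = a" "mem_level N z = m" using levels_jidx[OF am(1,2)] am(3) by auto
  thus ?thesis using am distinct on_levels_jidx[OF am(2)]
    unfolding phase2_weight_def stage_weight_def coord_x_def coord_y_def met_count_def
      u_final_def s_final_def by (auto simp: N_mesh algebra_simps)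
qed

lemma protocol_potential_mono:
  assumes "walk_superharmonic (mesh i2) (mesh i3) w" "walk_superharmonic (mesh i1) (mesh i3) w"
    and Q: "\<And>z. 0 \<le> Q z"
  shows "(\<Sum>z\<in>cells. protocol Q z * w (u_final z) (s_final z))
           \<le> (\<Sum>z\<in>cells. Q z * w (u_init z) (s_init z))"
proof -
  let ?Q1 = "grid_protocol G N (jidx N i3) (jidx N i2) Q"
  have "(\<Sum>z\<in>cells. protocol Q z * w (u_final z) (s_final z))
      = (\<Sum>z\<in>cells. protocol Q z * phase2_weight w N 0 z)"
    by (rule sum.cong) (simp_all add: phase2_weight_final)
  also have "\<dots> \<le> (\<Sum>z\<in>cells. ?Q1 z * phase2_weight w 0 0 z)"
    unfolding protocol_def phase2_weight_def
    by (rule swap_potential_mono) (use assms(2) grid_protocol_nonneg G_pos Q in auto)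
  also have "\<dots> = (\<Sum>z\<in>cells. ?Q1 z * phase1_weight w N 0 z)"
    by (rule sum.cong) (simp_all add: phase_junction)
  also have "\<dots> \<le> (\<Sum>z\<in>cells. Q z * phase1_weight w 0 0 z)"
    unfolding phase1_weight_def by (rule swap_potential_mono) (use assms(1) Q in auto)
  also have "\<dots> = (\<Sum>z\<in>cells. Q z * w (u_init z) (s_init z))"
    by (rule sum.cong) (simp_all add: phase1_weight_init)
  finally show ?thesis .
qed

lemma s_init_nonneg: "z \<in> cells \<Longrightarrow> 0 \<le> s_init z"
proof (erule cellsE)
  fix a m assume am: "a \<in> {i1, i2, i3}" "m \<in> {1..N}" "z = jidx N a m"
  have "0 \<le> real (m - 1) * mesh b" for b using mesh_offset_bounds[OF am(2)] by simp
  thus "0 \<le> s_init z" using am less_imp_le[OF gamma_pos[of i2]]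
    unfolding s_init_def by (auto simp: on_levels_jidx simp del: of_nat_diff)
qed

lemma s_final_le: "z \<in> cells \<Longrightarrow> s_final z \<le> 2"
proof (erule cellsE)
  fix a m assume am: "a \<in> {i1, i2, i3}" "m \<in> {1..N}" "z = jidx N a m"
  have "real (m - 1) * mesh b \<le> \<gamma> b" for b using mesh_offset_bounds[OF am(2), of b] mesh_pos[of b] by simp
  from this[of i1] this[of i2] this[of i3] show "s_final z \<le> 2"
    using am gamma13 gamma23 gamma_pos[of i1] gamma_pos[of i2] gamma_pos[of i3]
    unfolding s_final_def by (auto simp: on_levels_jidx simp del: of_nat_diff)
qed

lemma protocol_nonneg: "(\<And>z. 0 \<le> Q z) \<Longrightarrow> 0 \<le> protocol Q z"
  unfolding protocol_def by (intro grid_protocol_nonneg G_pos)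

lemma protocol_apart:
  assumes "z \<notin> cells"
  shows "protocol Q z = Q z"
proof -
  have "z \<notin> jidx N a ` {1..N}" if "a \<in> {i1, i2, i3}" for a
    using assms that unfolding cells_def level_cells_def by auto
  thus ?thesis unfolding protocol_def by (simp add: grid_protocol_apart)
qed

lemma sum_linear_protocol: "sum_linear protocol"
proof -
  have "sum_linear (\<lambda>Q. grid_protocol G N (jidx N i3) (jidx N i1)
                           (grid_protocol G N (jidx N i3) (jidx N i2) Q))"
    by (rule sum_linear_comp[OF sum_linear_grid_protocol sum_linear_grid_protocol])
  thus ?thesis unfolding protocol_def[abs_def] .
qed

definition mass_kernel :: "nat \<Rightarrow> nat \<Rightarrow> real" where
  "mass_kernel c = protocol (\<lambda>z. if z = c then 1 else 0)"

lemma mass_kernel_nonneg: "0 \<le> mass_kernel c z"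
  unfolding mass_kernel_def by (rule protocol_nonneg) simp

lemma protocol_eq_mass_kernel_sum:
  assumes "z \<in> cells"
  shows "protocol Q z = (\<Sum>c\<in>cells. Q c * mass_kernel c z)"
proof -
  define R where "R z = (if z \<in> cells then 0 else Q z)" for z
  let ?A = "\<lambda>z. \<Sum>c\<in>cells. Q c * (if z = c then 1 else 0)"
  have "Q = (\<lambda>z. ?A z + R z)"
    by (rule ext) (simp add: R_def finite_cells if_distrib cong: if_cong)
  hence "protocol Q = (\<lambda>z. protocol ?A z + protocol R z)"
    using sum_linear_add[OF sum_linear_protocol] by metis
  moreover have "protocol R = R"
    unfolding protocol_def
    by (subst (1 2) grid_protocol_fixes) (auto simp: R_def intro: jidx_in_cells)
  moreover have "protocol ?A = (\<lambda>z. \<Sum>c\<in>cells. Q c * mass_kernel c z)"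
    unfolding mass_kernel_def by (rule sum_linearD[OF sum_linear_protocol finite_cells])
  ultimately show ?thesis using assms by (simp add: R_def)
qed

lemma mass_kernel_mass: "c \<in> cells \<Longrightarrow> (\<Sum>z\<in>cells. mass_kernel c z) = 1"
proof -
  assume c: "c \<in> cells"
  have "(\<Sum>z\<in>cells. mass_kernel c z * k) \<le> k" for k :: real
    using protocol_potential_mono[of "\<lambda>_ _. k" "\<lambda>z. if z = c then 1 else 0"]
      sum_delta_mult[OF finite_cells c, of "\<lambda>_. k"]
    unfolding mass_kernel_def by (simp add: walk_superharmonic_const)
  hence "(\<Sum>z\<in>cells. mass_kernel c z) * k \<le> k" for k by (simp add: sum_distrib_right)
  from this[of 1] this[of "-1"] show ?thesis by simp
qed

lemma mass_kernel_variance: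
  "c \<in> cells \<Longrightarrow> (\<Sum>z\<in>cells. mass_kernel c z * (u_final z - u_init c)\<^sup>2) \<le> 1 / real N"
proof -
  assume c: "c \<in> cells"
  define \<kappa> where "\<kappa> = 1 / (2 * real N)"
  have \<kappa>: "0 \<le> \<kappa>" unfolding \<kappa>_def by simp
  have mesh_sum: "mesh b + mesh i3 \<le> 2 * \<kappa>" if "b = i1 \<or> b = i2" for b
  proof -
    have "(\<gamma> b + \<gamma> i3) / real N \<le> 1 / real N"
      using that gamma13 gamma23 N_pos by (auto intro: divide_right_mono)
    thus ?thesis unfolding mesh_def \<kappa>_def by (simp add: add_divide_distrib)
  qed
  let ?w = "\<lambda>u s. (u - u_init c)\<^sup>2 - \<kappa> * s"
  have "(\<Sum>z\<in>cells. mass_kernel c z * ?w (u_final z) (s_final z))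
      \<le> (\<Sum>z\<in>cells. (if z = c then 1 else 0) * ?w (u_init z) (s_init z))"
    unfolding mass_kernel_def
    by (rule protocol_potential_mono)
       (use mesh_pos mesh_sum in \<open>auto intro!: walk_superharmonic_quadratic\<close>)
  also have "\<dots> = - \<kappa> * s_init c" using sum_delta_mult[OF finite_cells c] by simp
  also have "\<dots> \<le> 0" using \<kappa> s_init_nonneg[OF c] by simp
  finally have "(\<Sum>z\<in>cells. mass_kernel c z * (u_final z - u_init c)\<^sup>2)
      \<le> \<kappa> * (\<Sum>z\<in>cells. mass_kernel c z * s_final z)"
    by (simp add: algebra_simps sum_subtractf sum_distrib_left)
  also have "\<dots> \<le> \<kappa> * (\<Sum>z\<in>cells. mass_kernel c z * 2)"
    by (intro mult_left_mono sum_mono \<kappa>) (simp_all add: mass_kernel_nonneg s_final_le mult_left_mono)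
  also have "\<dots> = 1 / real N"
    using mass_kernel_mass[OF c] N_pos unfolding \<kappa>_def by (simp add: sum_distrib_right[symmetric])
  finally show ?thesis .
qed

lemma mass_kernel_tail:
  assumes c: "c \<in> cells" and Z: "Z \<subseteq> cells" and \<eta>: "0 < \<eta>"
    and far: "\<And>z. z \<in> Z \<Longrightarrow> \<eta> \<le> \<bar>u_final z - u_init c\<bar>"
  shows "(\<Sum>z\<in>Z. mass_kernel c z) \<le> 1 / (real N * \<eta>\<^sup>2)"
proof -
  have "\<eta>\<^sup>2 * (\<Sum>z\<in>Z. mass_kernel c z) = (\<Sum>z\<in>Z. mass_kernel c z * \<eta>\<^sup>2)"
    by (simp add: sum_distrib_left mult.commute)
  also have "\<dots> \<le> (\<Sum>z\<in>Z. mass_kernel c z * (u_final z - u_init c)\<^sup>2)"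
  proof (rule sum_mono)
    fix z assume "z \<in> Z"
    hence "\<eta>\<^sup>2 \<le> \<bar>u_final z - u_init c\<bar>\<^sup>2" using far \<eta> by (intro power_mono) auto
    thus "mass_kernel c z * \<eta>\<^sup>2 \<le> mass_kernel c z * (u_final z - u_init c)\<^sup>2"
      by (simp add: mult_left_mono mass_kernel_nonneg)
  qed
  also have "\<dots> \<le> (\<Sum>z\<in>cells. mass_kernel c z * (u_final z - u_init c)\<^sup>2)"
    by (rule sum_mono2[OF finite_cells Z]) (simp add: mass_kernel_nonneg)
  also have "\<dots> \<le> 1 / real N" by (rule mass_kernel_variance[OF c])
  finally show ?thesis using \<eta> N_pos by (simp add: field_simps)
qed

lemma mass_kernel_threshold:
  assumes Z: "Z \<subseteq> cells" and c: "c \<in> cells" and \<eta>: "0 < \<eta>"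
    and above: "\<And>z. z \<in> Z \<Longrightarrow> t \<le> u_final z" and below: "\<And>z. z \<in> cells - Z \<Longrightarrow> u_final z < t"
  shows "0 \<le> (\<Sum>z\<in>Z. mass_kernel c z) \<and> (\<Sum>z\<in>Z. mass_kernel c z) \<le> 1"
    and "t + \<eta> < u_init c \<Longrightarrow> 1 - 1 / (real N * \<eta>\<^sup>2) \<le> (\<Sum>z\<in>Z. mass_kernel c z)"
    and "u_init c \<le> t - \<eta> \<Longrightarrow> (\<Sum>z\<in>Z. mass_kernel c z) \<le> 1 / (real N * \<eta>\<^sup>2)"
proof -
  have split: "(\<Sum>z\<in>cells. mass_kernel c z)
      = (\<Sum>z\<in>Z. mass_kernel c z) + (\<Sum>z\<in>cells - Z. mass_kernel c z)"
    using sum.subset_diff[OF Z finite_cells] by (simp add: add.commute)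
  have "0 \<le> (\<Sum>z\<in>cells - Z. mass_kernel c z)" by (rule sum_nonneg) (simp add: mass_kernel_nonneg)
  thus "0 \<le> (\<Sum>z\<in>Z. mass_kernel c z) \<and> (\<Sum>z\<in>Z. mass_kernel c z) \<le> 1"
    using split mass_kernel_mass[OF c] by (auto intro: sum_nonneg mass_kernel_nonneg)
  show "1 - 1 / (real N * \<eta>\<^sup>2) \<le> (\<Sum>z\<in>Z. mass_kernel c z)" if "t + \<eta> < u_init c"
  proof -
    have "(\<Sum>z\<in>cells - Z. mass_kernel c z) \<le> 1 / (real N * \<eta>\<^sup>2)"
      by (rule mass_kernel_tail[OF c _ \<eta>]) (use that below in \<open>force+\<close>)
    thus ?thesis using split mass_kernel_mass[OF c] by simp
  qed
  show "(\<Sum>z\<in>Z. mass_kernel c z) \<le> 1 / (real N * \<eta>\<^sup>2)" if "u_init c \<le> t - \<eta>"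
    by (rule mass_kernel_tail[OF c Z \<eta>]) (use that above in force)
qed

lemma protocol_mass_threshold:
  assumes Z: "Z \<subseteq> cells" and \<eta>: "0 < \<eta>"
    and above: "\<And>z. z \<in> Z \<Longrightarrow> t \<le> u_final z" and below: "\<And>z. z \<in> cells - Z \<Longrightarrow> u_final z < t"
    and Q: "\<And>c. c \<in> cells \<Longrightarrow> 0 \<le> Q c" and Q_sum: "(\<Sum>c\<in>cells. Q c) \<le> 1"
  shows "(\<Sum>c\<in>cells. if t + \<eta> < u_init c then Q c else 0) - 1 / (real N * \<eta>\<^sup>2)
           \<le> (\<Sum>z\<in>Z. protocol Q z)"
    and "(\<Sum>z\<in>Z. protocol Q z)
           \<le> (\<Sum>c\<in>cells. if t - \<eta> < u_init c then Q c else 0) + 1 / (real N * \<eta>\<^sup>2)"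
proof -
  have "(\<Sum>z\<in>Z. protocol Q z) = (\<Sum>z\<in>Z. \<Sum>c\<in>cells. Q c * mass_kernel c z)"
    by (rule sum.cong) (use Z protocol_eq_mass_kernel_sum in auto)
  also have "\<dots> = (\<Sum>c\<in>cells. Q c * (\<Sum>z\<in>Z. mass_kernel c z))"
    by (subst sum.swap) (simp add: sum_distrib_left)
  finally have swap: "(\<Sum>z\<in>Z. protocol Q z) = (\<Sum>c\<in>cells. Q c * (\<Sum>z\<in>Z. mass_kernel c z))" .
  have "0 \<le> 1 / (real N * \<eta>\<^sup>2)" by simp
  note bounds = mixture_bounds[OF finite_cells Q Q_sum _ this, of "\<lambda>c. \<Sum>z\<in>Z. mass_kernel c z"]
  note threshold = mass_kernel_threshold[OF Z _ \<eta> above below]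
  show "(\<Sum>c\<in>cells. if t + \<eta> < u_init c then Q c else 0) - 1 / (real N * \<eta>\<^sup>2)
      \<le> (\<Sum>z\<in>Z. protocol Q z)"
    unfolding swap by (rule bounds(1)) (use threshold in auto)
  show "(\<Sum>z\<in>Z. protocol Q z)
      \<le> (\<Sum>c\<in>cells. if t - \<eta> < u_init c then Q c else 0) + 1 / (real N * \<eta>\<^sup>2)"
    unfolding swap by (rule bounds(2)) (use threshold in auto)
qed

lemma u_final_jidx:
  assumes "m \<in> {1..N}"
  shows "u_final (jidx N i1 m) = \<gamma> i2 + real (m - 1) * mesh i1 - \<gamma> i3"
    "u_final (jidx N i2 m) = real (m - 1) * mesh i2 - \<gamma> i3"
    "u_final (jidx N i3 m) = \<gamma> i1 + \<gamma> i2 - real (m - 1) * mesh i3"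
  unfolding u_final_def using on_levels_jidx[OF assms] by simp_all

lemma level_mass_above:
  assumes Q0: "\<And>a m. a \<in> {i1, i2, i3} \<Longrightarrow> m \<in> {1..N} \<Longrightarrow> Q0 (jidx N a m) = p a / real N"
    and a: "a \<in> {i1, i2, i3}" and f: "\<And>m. m \<in> {1..N} \<Longrightarrow> u_init (jidx N a m) = f m"
  shows "(\<Sum>z\<in>level_cells a. if t < u_init z then Q0 z else 0)
           = p a / \<gamma> a * (\<Sum>m=1..N. if t < f m then mesh a else 0)"
proof -
  have "1 \<le> a" using a levels_pos by auto
  have "p a / real N = p a / \<gamma> a * mesh a" using gamma_pos[of a] unfolding mesh_def by simp
  thus ?thesis unfolding sum_level_cells[OF \<open>1 \<le> a\<close>] sum_distrib_left
    by (intro sum.cong refl) (simp add: Q0[OF a] f)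
qed

lemma initial_mass_above:
  assumes Q0: "\<And>a m. a \<in> {i1, i2, i3} \<Longrightarrow> m \<in> {1..N} \<Longrightarrow> Q0 (jidx N a m) = p a / real N"
    and p: "0 \<le> p i1" "0 \<le> p i2" "0 \<le> p i3" "p i1 + p i2 + p i3 \<le> 1"
  shows "\<bar>(\<Sum>c\<in>cells. if t < u_init c then Q0 c else 0) - top_mass \<gamma> p i1 i2 i3 (\<gamma> i1 + \<gamma> i2 - t)\<bar>
           \<le> 2 / real N"
proof -
  have scaled: "\<bar>p a / \<gamma> a * S - p a / \<gamma> a * R\<bar> \<le> k * p a / real N"
    if "0 \<le> p a" "\<bar>S - R\<bar> \<le> k * mesh a" for a S R k
    using abs_mult_diff_le[of "p a / \<gamma> a" S R "k * mesh a"] that gamma_pos[of a]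
    unfolding mesh_def by (simp add: mult.commute)
  have i1: "\<bar>(\<Sum>m=1..N. if t < \<gamma> i2 + real (m - 1) * mesh i1 then mesh i1 else 0)
      - ramp (\<gamma> i1) (\<gamma> i2 + \<gamma> i1 - t)\<bar> \<le> 1 * mesh i1"
    using grid_count_above[OF mesh_pos[of i1], where t=t and c="\<gamma> i2" and N=N] by (simp add: N_mesh)
  have i2: "\<bar>(\<Sum>m=1..N. if t < 0 + real (m - 1) * mesh i2 then mesh i2 else 0)
      - ramp (\<gamma> i2) (\<gamma> i2 - t)\<bar> \<le> 1 * mesh i2"
    using grid_count_above[OF mesh_pos[of i2], where t=t and c=0 and N=N] by (simp add: N_mesh)
  have i3: "\<bar>(\<Sum>m=1..N. if t < - (real (m - 1) * mesh i3) then mesh i3 else 0)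
      - ramp (\<gamma> i3) (- t)\<bar> \<le> 2 * mesh i3"
    using grid_count_above_reflected[OF mesh_pos[of i3], where t=t and N=N] by (simp add: N_mesh)
  have "top_mass \<gamma> p i1 i2 i3 (\<gamma> i1 + \<gamma> i2 - t) = p i1 / \<gamma> i1 * ramp (\<gamma> i1) (\<gamma> i2 + \<gamma> i1 - t)
      + p i2 / \<gamma> i2 * ramp (\<gamma> i2) (\<gamma> i2 - t) + p i3 / \<gamma> i3 * ramp (\<gamma> i3) (- t)"
    unfolding top_mass_def by (simp add: algebra_simps)
  moreover have "(\<Sum>c\<in>cells. if t < u_init c then Q0 c else 0)
      = p i1 / \<gamma> i1 * (\<Sum>m=1..N. if t < \<gamma> i2 + real (m - 1) * mesh i1 then mesh i1 else 0)
      + p i2 / \<gamma> i2 * (\<Sum>m=1..N. if t < 0 + real (m - 1) * mesh i2 then mesh i2 else 0)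
      + p i3 / \<gamma> i3 * (\<Sum>m=1..N. if t < - (real (m - 1) * mesh i3) then mesh i3 else 0)"
    unfolding sum_cells
    by (subst (1 2 3) level_mass_above[of Q0 p, OF Q0]) (auto simp: u_init_def on_levels_jidx)
  moreover have "(p i1 + p i2 + 2 * p i3) / real N \<le> 2 / real N"
    using p N_pos by (intro divide_right_mono) auto
  ultimately show ?thesis
    using scaled[OF p(1) i1] scaled[OF p(2) i2] scaled[OF p(3) i3] by (simp add: add_divide_distrib)
qed

lemma u_final_ranges:
  shows "z \<in> level_cells i3 \<Longrightarrow> \<gamma> i1 + \<gamma> i2 - \<gamma> i3 < u_final z"
    and "z \<in> level_cells i1 \<Longrightarrow> \<gamma> i2 - \<gamma> i3 \<le> u_final z \<and> u_final z < \<gamma> i1 + \<gamma> i2 - \<gamma> i3"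
    and "z \<in> level_cells i2 \<Longrightarrow> u_final z < \<gamma> i2 - \<gamma> i3"
proof -
  have offset: "0 \<le> real (m - 1) * mesh a \<and> real (m - 1) * mesh a < \<gamma> a" if "m \<in> {1..N}" for m a
    using mesh_offset_bounds[OF that, of a] mesh_pos[of a] by auto
  show "\<gamma> i1 + \<gamma> i2 - \<gamma> i3 < u_final z" if "z \<in> level_cells i3"
    using that by (rule level_cellsE) (use u_final_jidx(3) offset in fastforce)
  show "\<gamma> i2 - \<gamma> i3 \<le> u_final z \<and> u_final z < \<gamma> i1 + \<gamma> i2 - \<gamma> i3" if "z \<in> level_cells i1"
    using that by (rule level_cellsE) (use u_final_jidx(1) offset in fastforce)
  show "u_final z < \<gamma> i2 - \<gamma> i3" if "z \<in> level_cells i2"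
    using that by (rule level_cellsE) (use u_final_jidx(2) offset in fastforce)
qed

lemma sum_cells_initial:
  assumes "\<And>a m. a \<in> {i1, i2, i3} \<Longrightarrow> m \<in> {1..N} \<Longrightarrow> Q0 (jidx N a m) = p a / real N"
  shows "(\<Sum>c\<in>cells. Q0 c) = p i1 + p i2 + p i3"
  unfolding sum_cells using levels_pos N_pos by (simp add: sum_level_cells assms)

lemma protocol_mass_above:
  assumes Z: "Z \<subseteq> cells" and \<eta>: "0 < \<eta>"
    and above: "\<And>z. z \<in> Z \<Longrightarrow> t \<le> u_final z" and below: "\<And>z. z \<in> cells - Z \<Longrightarrow> u_final z < t"
    and Q0: "\<And>a m. a \<in> {i1, i2, i3} \<Longrightarrow> m \<in> {1..N} \<Longrightarrow> Q0 (jidx N a m) = p a / real N"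
    and p: "0 \<le> p i1" "0 \<le> p i2" "0 \<le> p i3" "p i1 + p i2 + p i3 \<le> 1"
  shows "\<bar>(\<Sum>z\<in>Z. protocol Q0 z) - top_mass \<gamma> p i1 i2 i3 (\<gamma> i1 + \<gamma> i2 - t)\<bar>
          \<le> (p i1 / \<gamma> i1 + p i2 / \<gamma> i2 + p i3 / \<gamma> i3) * \<eta> + 2 / real N + 1 / (real N * \<eta>\<^sup>2)"
proof -
  have Q0_nonneg: "0 \<le> Q0 c" if "c \<in> cells" for c
    using that p by (elim cellsE) (auto simp: Q0)
  have Q0_le: "(\<Sum>c\<in>cells. Q0 c) \<le> 1" using sum_cells_initial[of Q0 p, OF Q0] p(4) by simp
  note threshold = protocol_mass_threshold[OF Z \<eta> above below Q0_nonneg Q0_le]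
  have initial: "\<bar>(\<Sum>c\<in>cells. if t' < u_init c then Q0 c else 0)
      - top_mass \<gamma> p i1 i2 i3 (\<gamma> i1 + \<gamma> i2 - t')\<bar> \<le> 2 / real N" for t'
    by (rule initial_mass_above[OF Q0 p])
  let ?F = "top_mass \<gamma> p i1 i2 i3" and ?R = "p i1 / \<gamma> i1 + p i2 / \<gamma> i2 + p i3 / \<gamma> i3"
  have "\<bar>?F (\<gamma> i1 + \<gamma> i2 - (t + \<eta>)) - ?F (\<gamma> i1 + \<gamma> i2 - t)\<bar> \<le> ?R * \<eta>"
    "\<bar>?F (\<gamma> i1 + \<gamma> i2 - (t - \<eta>)) - ?F (\<gamma> i1 + \<gamma> i2 - t)\<bar> \<le> ?R * \<eta>"
    using top_mass_lipschitz[of \<gamma> p, OF gamma_pos p(1-3),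
        of "\<gamma> i1 + \<gamma> i2 - (t + \<eta>)" "\<gamma> i1 + \<gamma> i2 - t"]
      top_mass_lipschitz[of \<gamma> p, OF gamma_pos p(1-3),
        of "\<gamma> i1 + \<gamma> i2 - (t - \<eta>)" "\<gamma> i1 + \<gamma> i2 - t"] \<eta>
    by simp_all
  thus ?thesis using threshold initial[of "t + \<eta>"] initial[of "t - \<eta>"] by linarith
qed

lemma protocol_level_masses:
  assumes \<eta>: "0 < \<eta>"
    and Q0: "\<And>a m. a \<in> {i1, i2, i3} \<Longrightarrow> m \<in> {1..N} \<Longrightarrow> Q0 (jidx N a m) = p a / real N"
    and p: "0 \<le> p i1" "0 \<le> p i2" "0 \<le> p i3" "p i1 + p i2 + p i3 \<le> 1"
  defines "B \<equiv> (p i1 / \<gamma> i1 + p i2 / \<gamma> i2 + p i3 / \<gamma> i3) * \<eta> + 2 / real N + 1 / (real N * \<eta>\<^sup>2)"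
  shows "\<bar>(\<Sum>z\<in>level_cells i3. protocol Q0 z) - top_mass \<gamma> p i1 i2 i3 (\<gamma> i3)\<bar> \<le> B"
    and "\<bar>(\<Sum>z\<in>level_cells i1 \<union> level_cells i3. protocol Q0 z)
           - top_mass \<gamma> p i1 i2 i3 (\<gamma> i1 + \<gamma> i3)\<bar> \<le> B"
    and "(\<Sum>z\<in>cells. protocol Q0 z) = p i1 + p i2 + p i3"
proof -
  have "\<bar>(\<Sum>z\<in>level_cells i3. protocol Q0 z)
      - top_mass \<gamma> p i1 i2 i3 (\<gamma> i1 + \<gamma> i2 - (\<gamma> i1 + \<gamma> i2 - \<gamma> i3))\<bar> \<le> B"
    unfolding B_def
  proof (rule protocol_mass_above[OF _ \<eta> _ _ Q0 p])
    show "level_cells i3 \<subseteq> cells" unfolding cells_def by auto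
    show "\<gamma> i1 + \<gamma> i2 - \<gamma> i3 \<le> u_final z" if "z \<in> level_cells i3" for z
      using u_final_ranges(1)[OF that] by simp
    show "u_final z < \<gamma> i1 + \<gamma> i2 - \<gamma> i3" if "z \<in> cells - level_cells i3" for z
      using that u_final_ranges(2,3)[of z] gamma_pos[of i1] unfolding cells_def by force
  qed
  thus "\<bar>(\<Sum>z\<in>level_cells i3. protocol Q0 z) - top_mass \<gamma> p i1 i2 i3 (\<gamma> i3)\<bar> \<le> B" by simp
  have "\<bar>(\<Sum>z\<in>level_cells i1 \<union> level_cells i3. protocol Q0 z)
      - top_mass \<gamma> p i1 i2 i3 (\<gamma> i1 + \<gamma> i2 - (\<gamma> i2 - \<gamma> i3))\<bar> \<le> B"
    unfolding B_def
  proof (rule protocol_mass_above[OF _ \<eta> _ _ Q0 p])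
    show "level_cells i1 \<union> level_cells i3 \<subseteq> cells" unfolding cells_def by auto
    show "\<gamma> i2 - \<gamma> i3 \<le> u_final z" if "z \<in> level_cells i1 \<union> level_cells i3" for z
      using that u_final_ranges(1,2)[of z] gamma_pos[of i1] by force
    show "u_final z < \<gamma> i2 - \<gamma> i3" if "z \<in> cells - (level_cells i1 \<union> level_cells i3)" for z
      using that u_final_ranges(3)[of z] unfolding cells_def by force
  qed
  thus "\<bar>(\<Sum>z\<in>level_cells i1 \<union> level_cells i3. protocol Q0 z)
      - top_mass \<gamma> p i1 i2 i3 (\<gamma> i1 + \<gamma> i3)\<bar> \<le> B"
    by (simp add: add.commute)
  have "(\<Sum>z\<in>cells. protocol Q0 z) = (\<Sum>z\<in>cells. \<Sum>c\<in>cells. Q0 c * mass_kernel c z)"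
    by (rule sum.cong) (simp_all add: protocol_eq_mass_kernel_sum)
  also have "\<dots> = (\<Sum>c\<in>cells. Q0 c * (\<Sum>z\<in>cells. mass_kernel c z))"
    by (subst sum.swap) (simp add: sum_distrib_left)
  also have "\<dots> = (\<Sum>c\<in>cells. Q0 c)" by (rule sum.cong) (simp_all add: mass_kernel_mass)
  also have "\<dots> = p i1 + p i2 + p i3" by (rule sum_cells_initial[of Q0 p, OF Q0])
  finally show "(\<Sum>z\<in>cells. protocol Q0 z) = p i1 + p i2 + p i3" .
qed

lemma swap_protocols_eq_protocol:
  "swap_protocol G N i1 i3 (swap_protocol G N i2 i3 Q) = protocol Q"
  unfolding swap_protocol_eq_grid_protocol protocol_def ..

lemma marginal_eq_sum_level_cells: "1 \<le> a \<Longrightarrow> marginal N Q a = (\<Sum>z\<in>level_cells a. Q z)"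
  unfolding marginal_def by (simp add: sum_level_cells)

lemma marginal_protocol_apart:
  assumes "1 \<le> a" "a \<notin> {i1, i2, i3}"
  shows "marginal N (protocol Q) a = marginal N Q a"
proof -
  have "jidx N a m \<notin> cells" if "m \<in> {1..N}" for m
    using assms that levels_pos by (auto elim!: cellsE simp: jidx_eq_iff)
  thus ?thesis unfolding marginal_def by (simp add: protocol_apart)
qed

lemma protocol_marginals:
  assumes \<eta>: "0 < \<eta>"
    and Q0: "\<And>a m. a \<in> {i1, i2, i3} \<Longrightarrow> m \<in> {1..N} \<Longrightarrow> Q0 (jidx N a m) = p a / real N"
    and p: "0 \<le> p i1" "0 \<le> p i2" "0 \<le> p i3" "p i1 + p i2 + p i3 \<le> 1"
  defines "q \<equiv> marginal N (protocol Q0)"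
    and "B \<equiv> (p i1 / \<gamma> i1 + p i2 / \<gamma> i2 + p i3 / \<gamma> i3) * \<eta> + 2 / real N + 1 / (real N * \<eta>\<^sup>2)"
  shows "\<bar>q i3 - top_mass \<gamma> p i1 i2 i3 (\<gamma> i3)\<bar> \<le> B"
    and "\<bar>q i1 + q i3 - top_mass \<gamma> p i1 i2 i3 (\<gamma> i1 + \<gamma> i3)\<bar> \<le> B"
    and "q i1 + q i2 + q i3 = p i1 + p i2 + p i3"
proof -
  note masses = protocol_level_masses[OF \<eta> Q0 p, folded B_def]
  have q: "q a = (\<Sum>z\<in>level_cells a. protocol Q0 z)" if "a \<in> {i1, i2, i3}" for a
    unfolding q_def using that levels_pos by (auto simp: marginal_eq_sum_level_cells)
  show "\<bar>q i3 - top_mass \<gamma> p i1 i2 i3 (\<gamma> i3)\<bar> \<le> B" using masses(1) q by simp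
  have "(\<Sum>z\<in>level_cells i1 \<union> level_cells i3. protocol Q0 z) = q i1 + q i3"
    using q levels_pos distinct by (simp add: sum.union_disjoint finite_level_cells level_cells_disjoint)
  thus "\<bar>q i1 + q i3 - top_mass \<gamma> p i1 i2 i3 (\<gamma> i1 + \<gamma> i3)\<bar> \<le> B" using masses(2) by simp
  show "q i1 + q i2 + q i3 = p i1 + p i2 + p i3" using masses(3) q by (simp add: sum_cells)
qed

end

section \<open>The thermomajorisation curve near three consecutive levels\<close>

lemma cum_0: "cum d \<pi> v 0 = 0"
  unfolding cum_def by simp

lemma cum_Suc: "cum d \<pi> v (Suc k) = cum d \<pi> v k + v (inv_into {1..d} \<pi> (Suc k))"
  unfolding cum_def by simp

locale thermo_order =
  fixes d :: nat and \<gamma> p :: "nat \<Rightarrow> real" and \<pi> :: "nat \<Rightarrow> nat"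
  assumes bij: "bij_betw \<pi> {1..d} {1..d}" and gamma_pos: "\<And>a. 0 < \<gamma> a"
begin

lemma pi_in: "a \<in> {1..d} \<Longrightarrow> \<pi> a \<in> {1..d}"
  using bij bij_betwE by blast

lemma inj_pi: "inj_on \<pi> {1..d}"
  using bij by (rule bij_betw_imp_inj_on)

lemma inv_pi: "a \<in> {1..d} \<Longrightarrow> inv_into {1..d} \<pi> (\<pi> a) = a"
  using inj_pi by simp

lemma cum_strict_mono: "j < k \<Longrightarrow> cum d \<pi> \<gamma> j < cum d \<pi> \<gamma> k"
proof (induction k)
  case (Suc k)
  have "cum d \<pi> \<gamma> k < cum d \<pi> \<gamma> (Suc k)" using gamma_pos by (simp add: cum_Suc)
  thus ?case using Suc by (cases "j = k") auto
qed simp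

lemma cum_mono: "j \<le> k \<Longrightarrow> cum d \<pi> \<gamma> j \<le> cum d \<pi> \<gamma> k"
  using cum_strict_mono by (cases "j = k") (auto simp: less_imp_le)

lemma thermo_curve_segment:
  assumes "cum d \<pi> \<gamma> k < x" "x \<le> cum d \<pi> \<gamma> (Suc k)"
  shows "thermo_curve d \<gamma> p \<pi> x = cum d \<pi> p k
           + (x - cum d \<pi> \<gamma> k) * p (inv_into {1..d} \<pi> (Suc k)) / \<gamma> (inv_into {1..d} \<pi> (Suc k))"
proof -
  have "(LEAST j. x \<le> cum d \<pi> \<gamma> j) = Suc k"
  proof (rule Least_equality)
    fix j assume "x \<le> cum d \<pi> \<gamma> j"
    thus "Suc k \<le> j" using assms(1) cum_mono[of j k] by (meson not_less_eq_eq order.strict_trans2 not_less)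
  qed (fact assms(2))
  thus ?thesis unfolding thermo_curve_def Let_def
    using gamma_pos[of "inv_into {1..d} \<pi> (Suc k)"] by (simp add: cum_Suc)
qed

lemma thermo_curve_vertex: "thermo_curve d \<gamma> p \<pi> (cum d \<pi> \<gamma> k) = cum d \<pi> p k"
proof (cases k)
  case 0
  have "(LEAST j. cum d \<pi> \<gamma> 0 \<le> cum d \<pi> \<gamma> j) = 0" by (rule Least_equality) (auto intro: cum_mono)
  thus ?thesis unfolding thermo_curve_def Let_def 0 by (simp add: cum_0)
next
  case (Suc j)
  thus ?thesis using thermo_curve_segment[of j "cum d \<pi> \<gamma> k"] cum_strict_mono[of j k]
      gamma_pos[of "inv_into {1..d} \<pi> (Suc j)"] by (simp add: cum_Suc)
qed

end

locale consecutive_triple = thermo_order +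
  fixes i1 i2 i3 :: nat
  assumes levels: "i1 \<in> {1..d}" "i2 \<in> {1..d}" "i3 \<in> {1..d}"
    and distinct: "i1 \<noteq> i2" "i2 \<noteq> i3" "i1 \<noteq> i3"
    and consecutive: "\<pi> i3 = \<pi> i2 + 1" "\<pi> i2 = \<pi> i1 + 1"
begin

definition rotated :: "nat \<Rightarrow> nat" where
  "rotated = \<pi> \<circ> Transposition.transpose i2 i3 \<circ> Transposition.transpose i1 i3"

definition k0 :: nat where "k0 = \<pi> i1 - 1"

lemma positions: "\<pi> i1 = Suc k0" "\<pi> i2 = k0 + 2" "\<pi> i3 = k0 + 3" "k0 + 3 \<le> d"
  using consecutive pi_in[OF levels(1)] pi_in[OF levels(3)] unfolding k0_def by auto

lemma inv_pi_triple:
  "inv_into {1..d} \<pi> (Suc k0) = i1" "inv_into {1..d} \<pi> (k0 + 2) = i2" "inv_into {1..d} \<pi> (k0 + 3) = i3"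
  using inv_pi[OF levels(1)] inv_pi[OF levels(2)] inv_pi[OF levels(3)] positions by auto

lemma inv_pi_other:
  assumes "l \<in> {1..d}" "l \<notin> {Suc k0, k0 + 2, k0 + 3}"
  shows "inv_into {1..d} \<pi> l \<notin> {i1, i2, i3}"
proof -
  have "\<pi> (inv_into {1..d} \<pi> l) = l" using bij assms(1) by (simp add: bij_betw_def f_inv_into_f)
  thus ?thesis using assms positions by auto
qed

lemma rotated_values:
  "rotated i3 = Suc k0" "rotated i1 = k0 + 2" "rotated i2 = k0 + 3"
  "a \<notin> {i1, i2, i3} \<Longrightarrow> rotated a = \<pi> a"
  unfolding rotated_def using positions distinct by (auto simp: Transposition.transpose_def)

lemma inj_rotated: "inj_on rotated {1..d}"
proof (rule inj_onI)
  fix x y assume x: "x \<in> {1..d}" and y: "y \<in> {1..d}" and eq: "rotated x = rotated y"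
  let ?t = "\<lambda>x. Transposition.transpose i2 i3 (Transposition.transpose i1 i3 x)"
  have "?t x \<in> {1..d}" "?t y \<in> {1..d}" using x y levels unfolding Transposition.transpose_def by auto
  hence "?t x = ?t y" using eq inj_pi unfolding rotated_def by (auto dest: inj_onD)
  thus "x = y" unfolding Transposition.transpose_def by (auto split: if_splits)
qed

lemma inv_rotated:
  assumes l: "l \<in> {1..d}"
  shows "inv_into {1..d} rotated l
           = Transposition.transpose i1 i3 (Transposition.transpose i2 i3 (inv_into {1..d} \<pi> l))"
proof (rule inv_into_f_eq[OF inj_rotated])
  have l\<pi>: "l \<in> \<pi> ` {1..d}" using bij l by (simp add: bij_betw_def)
  hence "inv_into {1..d} \<pi> l \<in> {1..d}" by (rule inv_into_into)
  thus "Transposition.transpose i1 i3 (Transposition.transpose i2 i3 (inv_into {1..d} \<pi> l)) \<in> {1..d}"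
    using levels unfolding Transposition.transpose_def by auto
  have "Transposition.transpose i2 i3 (Transposition.transpose i1 i3
      (Transposition.transpose i1 i3 (Transposition.transpose i2 i3 x))) = x" for x
    by (simp add: Transposition.transpose_def)
  thus "rotated (Transposition.transpose i1 i3 (Transposition.transpose i2 i3 (inv_into {1..d} \<pi> l))) = l"
    unfolding rotated_def comp_def using f_inv_into_f[OF l\<pi>] by simp
qed

lemma cum_rotated:
  "j \<le> d \<Longrightarrow> cum d rotated \<gamma> j
     = cum d \<pi> \<gamma> j + (if j = Suc k0 then \<gamma> i3 - \<gamma> i1 else if j = k0 + 2 then \<gamma> i3 - \<gamma> i2 else 0)"
proof (induction j)
  case (Suc j)
  have l: "Suc j \<in> {1..d}" using Suc.prems by simp
  let ?b = "inv_into {1..d} \<pi> (Suc j)"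
  have step: "cum d rotated \<gamma> (Suc j) - cum d rotated \<gamma> j - (cum d \<pi> \<gamma> (Suc j) - cum d \<pi> \<gamma> j)
      = \<gamma> (Transposition.transpose i1 i3 (Transposition.transpose i2 i3 ?b)) - \<gamma> ?b"
    unfolding cum_Suc inv_rotated[OF l] by simp
  have t: "Transposition.transpose i1 i3 (Transposition.transpose i2 i3 i1) = i3"
    "Transposition.transpose i1 i3 (Transposition.transpose i2 i3 i2) = i1"
    "Transposition.transpose i1 i3 (Transposition.transpose i2 i3 i3) = i2"
    using distinct by (auto simp: Transposition.transpose_def)
  have IH: "cum d rotated \<gamma> j
      = cum d \<pi> \<gamma> j + (if j = Suc k0 then \<gamma> i3 - \<gamma> i1 else if j = k0 + 2 then \<gamma> i3 - \<gamma> i2 else 0)"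
    using Suc by simp
  consider "j = k0" | "j = Suc k0" | "j = k0 + 2" | "Suc j \<notin> {Suc k0, k0 + 2, k0 + 3}"
    by force
  thus ?case
  proof cases
    case 1
    hence "?b = i1" using inv_pi_triple by simp
    thus ?thesis using IH step t 1 by simp
  next
    case 2
    hence "?b = i2" using inv_pi_triple by simp
    thus ?thesis using IH step t 2 by simp
  next
    case 3
    hence "?b = i3" using inv_pi_triple(3) by (simp add: eval_nat_numeral)
    thus ?thesis using IH step t 3 by simp
  next
    case 4
    hence "?b \<notin> {i1, i2, i3}" by (rule inv_pi_other[OF l])
    hence "Transposition.transpose i1 i3 (Transposition.transpose i2 i3 ?b) = ?b"
      by (simp add: Transposition.transpose_def)
    thus ?thesis using IH step 4 by simp
  qed
qed (simp add: cum_0)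

lemma cum_triple:
  "cum d \<pi> v (Suc k0) = cum d \<pi> v k0 + v i1"
  "cum d \<pi> v (k0 + 2) = cum d \<pi> v k0 + v i1 + v i2"
  "cum d \<pi> v (k0 + 3) = cum d \<pi> v k0 + v i1 + v i2 + v i3"
  using cum_Suc[of d \<pi> v k0] cum_Suc[of d \<pi> v "Suc k0"] cum_Suc[of d \<pi> v "Suc (Suc k0)"] inv_pi_triple
  by (simp_all add: eval_nat_numeral)

lemma thermo_curve_triple:
  assumes \<tau>: "0 \<le> \<tau>" "\<tau> \<le> \<gamma> i1 + \<gamma> i2 + \<gamma> i3"
  shows "thermo_curve d \<gamma> p \<pi> (cum d \<pi> \<gamma> k0 + \<tau>) = cum d \<pi> p k0 + top_mass \<gamma> p i1 i2 i3 \<tau>"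
proof -
  let ?X = "cum d \<pi> \<gamma> k0"
  have g: "0 < \<gamma> i1" "0 < \<gamma> i2" "0 < \<gamma> i3" using gamma_pos by auto
  have inv: "inv_into {1..d} \<pi> (Suc k0) = i1" "inv_into {1..d} \<pi> (Suc (Suc k0)) = i2"
    "inv_into {1..d} \<pi> (Suc (Suc (Suc k0))) = i3"
    using inv_pi_triple by (simp_all add: eval_nat_numeral)
  have cums: "cum d \<pi> v (Suc (Suc k0)) = cum d \<pi> v k0 + v i1 + v i2"
    "cum d \<pi> v (Suc (Suc (Suc k0))) = cum d \<pi> v k0 + v i1 + v i2 + v i3" for v
    using cum_triple(2,3) by (simp_all add: eval_nat_numeral)
  consider "\<tau> = 0" | "0 < \<tau>" "\<tau> \<le> \<gamma> i1" | "\<gamma> i1 < \<tau>" "\<tau> \<le> \<gamma> i1 + \<gamma> i2" | "\<gamma> i1 + \<gamma> i2 < \<tau>"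
    using \<tau> by linarith
  thus ?thesis
  proof cases
    case 1
    thus ?thesis using thermo_curve_vertex[of k0] g by (simp add: top_mass_def ramp_def)
  next
    case 2
    thus ?thesis using thermo_curve_segment[of k0 "?X + \<tau>"] g inv cum_triple(1)[of \<gamma>]
      by (simp add: top_mass_def ramp_def)
  next
    case 3
    thus ?thesis using thermo_curve_segment[of "Suc k0" "?X + \<tau>"] g inv cum_triple(1) cums(1)
      by (simp add: top_mass_def ramp_def algebra_simps)
  next
    case 4
    thus ?thesis using thermo_curve_segment[of "Suc (Suc k0)" "?X + \<tau>"] \<tau> g inv cums
      by (simp add: top_mass_def ramp_def field_simps)
  qed
qed

lemma extreme_point_rotated:
  shows "extreme_point d \<gamma> p \<pi> rotated i3 = top_mass \<gamma> p i1 i2 i3 (\<gamma> i3)"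
    and "extreme_point d \<gamma> p \<pi> rotated i1
           = top_mass \<gamma> p i1 i2 i3 (\<gamma> i1 + \<gamma> i3) - top_mass \<gamma> p i1 i2 i3 (\<gamma> i3)"
    and "extreme_point d \<gamma> p \<pi> rotated i2
           = p i1 + p i2 + p i3 - top_mass \<gamma> p i1 i2 i3 (\<gamma> i1 + \<gamma> i3)"
proof -
  let ?y = "\<lambda>k. thermo_curve d \<gamma> p \<pi> (cum d rotated \<gamma> k)"
  have ep: "extreme_point d \<gamma> p \<pi> rotated a = ?y (rotated a) - ?y (rotated a - 1)" for a
    unfolding extreme_point_def Let_def ..
  have g: "0 < \<gamma> i1" "0 < \<gamma> i2" "0 < \<gamma> i3" using gamma_pos by auto
  have y0: "?y k0 = cum d \<pi> p k0"
    using cum_rotated[of k0] positions thermo_curve_vertex by simp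
  have y1: "?y (Suc k0) = cum d \<pi> p k0 + top_mass \<gamma> p i1 i2 i3 (\<gamma> i3)"
    using cum_rotated[of "Suc k0"] positions cum_triple(1)[of \<gamma>] thermo_curve_triple[of "\<gamma> i3"] g
    by simp
  have y2: "?y (k0 + 2) = cum d \<pi> p k0 + top_mass \<gamma> p i1 i2 i3 (\<gamma> i1 + \<gamma> i3)"
    using cum_rotated[of "k0 + 2"] positions cum_triple(2)[of \<gamma>]
      thermo_curve_triple[of "\<gamma> i1 + \<gamma> i3"] g
    by (simp add: algebra_simps)
  have y3: "?y (k0 + 3) = cum d \<pi> p k0 + p i1 + p i2 + p i3"
    using cum_rotated[of "k0 + 3"] positions cum_triple(3)[of p] thermo_curve_vertex[of "k0 + 3"]
    by simp
  show "extreme_point d \<gamma> p \<pi> rotated i3 = top_mass \<gamma> p i1 i2 i3 (\<gamma> i3)"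
    unfolding ep rotated_values using y0 y1 by simp
  show "extreme_point d \<gamma> p \<pi> rotated i1
      = top_mass \<gamma> p i1 i2 i3 (\<gamma> i1 + \<gamma> i3) - top_mass \<gamma> p i1 i2 i3 (\<gamma> i3)"
    unfolding ep rotated_values using y1 y2 by simp
  show "extreme_point d \<gamma> p \<pi> rotated i2
      = p i1 + p i2 + p i3 - top_mass \<gamma> p i1 i2 i3 (\<gamma> i1 + \<gamma> i3)"
    unfolding ep rotated_values using y2 y3 by simp
qed

lemma extreme_point_rotated_apart:
  assumes a: "a \<in> {1..d}" "a \<notin> {i1, i2, i3}"
  shows "extreme_point d \<gamma> p \<pi> rotated a = p a"
proof -
  let ?y = "\<lambda>k. thermo_curve d \<gamma> p \<pi> (cum d rotated \<gamma> k)" and ?k = "\<pi> a"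
  have k: "?k \<in> {1..d}" by (rule pi_in[OF a(1)])
  have k_apart: "?k \<noteq> Suc k0" "?k \<noteq> k0 + 2" "?k \<noteq> k0 + 3"
    using a inj_pi positions levels unfolding inj_on_def by (metis insertCI)+
  have "cum d rotated \<gamma> ?k = cum d \<pi> \<gamma> ?k" using cum_rotated[of ?k] k k_apart by simp
  moreover have "cum d rotated \<gamma> (?k - 1) = cum d \<pi> \<gamma> (?k - 1)"
    using cum_rotated[of "?k - 1"] k k_apart by auto
  ultimately have "?y ?k - ?y (?k - 1) = cum d \<pi> p ?k - cum d \<pi> p (?k - 1)"
    by (simp add: thermo_curve_vertex)
  also have "\<dots> = p (inv_into {1..d} \<pi> ?k)"
    using cum_Suc[of d \<pi> p "?k - 1"] k by simp
  also have "\<dots> = p a" using inv_pi[OF a(1)] by simp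
  finally show ?thesis unfolding extreme_point_def Let_def rotated_values(4)[OF a(2)] .
qed

end

section \<open>Convergence to the extreme point\<close>

lemma tvd_le_of_three_level_approx:
  fixes q e :: "nat \<Rightarrow> real"
  assumes levels: "i1 \<in> {1..d}" "i2 \<in> {1..d}" "i3 \<in> {1..d}" "i1 \<noteq> i2" "i2 \<noteq> i3" "i1 \<noteq> i3"
    and apart: "\<And>a. a \<in> {1..d} \<Longrightarrow> a \<notin> {i1, i2, i3} \<Longrightarrow> q a = e a"
    and "\<bar>q i3 - e i3\<bar> \<le> B" "\<bar>q i1 + q i3 - (e i1 + e i3)\<bar> \<le> B"
    and "q i1 + q i2 + q i3 = e i1 + e i2 + e i3"
  shows "tvd d q e \<le> 2 * B"
proof -
  have "(\<Sum>a=1..d. \<bar>q a - e a\<bar>) = (\<Sum>a\<in>{i1, i2, i3}. \<bar>q a - e a\<bar>)"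
    by (rule sum.mono_neutral_right) (use levels apart in auto)
  also have "\<dots> = \<bar>q i1 - e i1\<bar> + \<bar>q i2 - e i2\<bar> + \<bar>q i3 - e i3\<bar>" using levels by simp
  also have "\<dots> \<le> 4 * B" using assms(8-10) by linarith
  finally show ?thesis unfolding tvd_def by simp
qed

lemma gibbs_pos: "1 \<le> d \<Longrightarrow> 0 < gibbs d \<beta> E a"
  unfolding gibbs_def by (intro divide_pos_pos exp_gt_zero sum_pos) auto

lemma gibbs_sum: "1 \<le> d \<Longrightarrow> (\<Sum>a=1..d. gibbs d \<beta> E a) = 1"
proof -
  assume "1 \<le> d"
  hence "0 < (\<Sum>b=1..d. exp (- \<beta> * E b))" by (intro sum_pos) auto
  thus ?thesis unfolding gibbs_def by (simp add: sum_divide_distrib[symmetric])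
qed

lemma sum_subset_le_one:
  fixes f :: "nat \<Rightarrow> real"
  assumes "S \<subseteq> {1..d}" "\<And>a. a \<in> {1..d} \<Longrightarrow> 0 \<le> f a" "(\<Sum>a=1..d. f a) = 1"
  shows "(\<Sum>a\<in>S. f a) \<le> 1"
  using sum_mono2[of "{1..d}" S f] assms by auto

lemma three_level_walk_gibbs:
  assumes levels: "i1 \<in> {1..d}" "i2 \<in> {1..d}" "i3 \<in> {1..d}"
    and distinct: "i1 \<noteq> i2" "i2 \<noteq> i3" "i1 \<noteq> i3" and "1 \<le> N"
  shows "three_level_walk N i1 i2 i3 (gibbs d \<beta> E) (joint_gibbs d \<beta> E N)"
proof -
  have d: "1 \<le> d" using levels by auto
  note pos = gibbs_pos[OF d] and sum = gibbs_sum[OF d]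
  have nonneg: "0 \<le> gibbs d \<beta> E a" for a using pos[of \<beta> E a] by simp
  have "(\<Sum>a\<in>{i1, i3}. gibbs d \<beta> E a) \<le> 1"
    by (rule sum_subset_le_one[OF _ _ sum]) (use levels nonneg in auto)
  moreover have "(\<Sum>a\<in>{i2, i3}. gibbs d \<beta> E a) \<le> 1"
    by (rule sum_subset_le_one[OF _ _ sum]) (use levels nonneg in auto)
  ultimately show ?thesis
    using assms pos unfolding three_level_walk_def joint_gibbs_def by (auto simp: sys_level_jidx)
qed

lemma tvd_nonneg: "0 \<le> tvd d p q"
  unfolding tvd_def by (simp add: sum_nonneg)

lemma tvd_output_le:
  assumes pv: "prob_vec d p" and bo: "beta_order d (gibbs d \<beta> E) p \<pi>"
    and levels: "i1 \<in> {1..d}" "i2 \<in> {1..d}" "i3 \<in> {1..d}"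
    and distinct: "i1 \<noteq> i2" "i2 \<noteq> i3" "i1 \<noteq> i3"
    and consecutive: "\<pi> i3 = \<pi> i2 + 1" "\<pi> i2 = \<pi> i1 + 1"
    and N: "1 \<le> N" and \<eta>: "0 < \<eta>"
  shows "tvd d (marginal N (mem_therm d N (swap_protocol (joint_gibbs d \<beta> E N) N i1 i3
            (swap_protocol (joint_gibbs d \<beta> E N) N i2 i3 (tensor_eta d N p)))))
          (extreme_point d (gibbs d \<beta> E) p \<pi>
            (\<pi> \<circ> Transposition.transpose i2 i3 \<circ> Transposition.transpose i1 i3))
         \<le> 2 * ((p i1 / gibbs d \<beta> E i1 + p i2 / gibbs d \<beta> E i2 + p i3 / gibbs d \<beta> E i3) * \<eta>
                + 2 / real N + 1 / (real N * \<eta>\<^sup>2))"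
proof -
  interpret W: three_level_walk N i1 i2 i3 "gibbs d \<beta> E" "joint_gibbs d \<beta> E N"
    by (rule three_level_walk_gibbs) (fact assms)+
  interpret T: consecutive_triple d "gibbs d \<beta> E" p \<pi> i1 i2 i3
    using bo W.gamma_pos levels distinct consecutive
    by unfold_locales (auto simp: beta_order_def)
  have p: "0 \<le> p a" if "a \<in> {1..d}" for a using pv that unfolding prob_vec_def by auto
  have p_sum: "p i1 + p i2 + p i3 \<le> 1"
    using sum_subset_le_one[of "{i1, i2, i3}" d p] pv levels distinct p unfolding prob_vec_def by auto
  have Q0: "tensor_eta d N p (jidx N a m) = p a / real N"
    if "a \<in> {i1, i2, i3}" "m \<in> {1..N}" for a m
    using that levels by (auto intro: tensor_eta_jidx)
  let ?q = "marginal N (W.protocol (tensor_eta d N p))"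
  let ?e = "extreme_point d (gibbs d \<beta> E) p \<pi>
              (\<pi> \<circ> Transposition.transpose i2 i3 \<circ> Transposition.transpose i1 i3)"
  note approx = W.protocol_marginals[OF \<eta> Q0 p[OF levels(1)] p[OF levels(2)] p[OF levels(3)] p_sum]
  note extreme = T.extreme_point_rotated[unfolded T.rotated_def]
    and extreme_apart = T.extreme_point_rotated_apart[unfolded T.rotated_def]
  have "tvd d ?q ?e \<le> 2 * ((p i1 / gibbs d \<beta> E i1 + p i2 / gibbs d \<beta> E i2 + p i3 / gibbs d \<beta> E i3) * \<eta>
                             + 2 / real N + 1 / (real N * \<eta>\<^sup>2))"
  proof (rule tvd_le_of_three_level_approx[OF levels distinct])
    fix a assume "a \<in> {1..d}" "a \<notin> {i1, i2, i3}"
    thus "?q a = ?e a" using W.marginal_protocol_apart marginal_tensor_eta N extreme_apart by auto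
  qed (use approx extreme in simp_all)
  moreover have "marginal N (mem_therm d N (W.protocol (tensor_eta d N p))) a = ?q a"
    if "a \<in> {1..d}" for a
    unfolding mem_therm_def using that N by (rule marginal_tensor_eta)
  ultimately show ?thesis unfolding W.swap_protocols_eq_protocol tvd_def by simp
qed

theorem theorem3:
  fixes d :: nat and \<beta> :: real and E p :: "nat \<Rightarrow> real" and \<pi> :: "nat \<Rightarrow> nat"
    and i1 i2 i3 :: nat
  assumes "d \<ge> 3" and "\<beta> > 0"
    and "prob_vec d p"
    and "beta_order d (gibbs d \<beta> E) p \<pi>"
    and "i1 \<in> {1..d}" "i2 \<in> {1..d}" "i3 \<in> {1..d}"
    and "i1 \<noteq> i2" "i2 \<noteq> i3" "i1 \<noteq> i3"
    and "\<pi> i3 = \<pi> i2 + 1" "\<pi> i2 = \<pi> i1 + 1"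
  shows "(\<forall>N\<ge>1.
            (let G = joint_gibbs d \<beta> E N;
                 out = mem_therm d N (swap_protocol G N i1 i3
                         (swap_protocol G N i2 i3 (tensor_eta d N p)))
             in out = tensor_eta d N (marginal N out)))
       \<and> (\<lambda>N. let G = joint_gibbs d \<beta> E N;
                   out = mem_therm d N (swap_protocol G N i1 i3
                           (swap_protocol G N i2 i3 (tensor_eta d N p)))
               in tvd d (marginal N out)
                    (extreme_point d (gibbs d \<beta> E) p \<pi>
                       (\<pi> \<circ> Transposition.transpose i2 i3 \<circ> Transposition.transpose i1 i3)))
         \<longlonglongrightarrow> 0"
proof -
  let ?out = "\<lambda>N. mem_therm d N (swap_protocol (joint_gibbs d \<beta> E N) N i1 i3
                  (swap_protocol (joint_gibbs d \<beta> E N) N i2 i3 (tensor_eta d N p)))"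
  let ?extreme = "extreme_point d (gibbs d \<beta> E) p \<pi>
                    (\<pi> \<circ> Transposition.transpose i2 i3 \<circ> Transposition.transpose i1 i3)"
  let ?R = "p i1 / gibbs d \<beta> E i1 + p i2 / gibbs d \<beta> E i2 + p i3 / gibbs d \<beta> E i3"
  (* The radius N^(-1/4) in tvd_output_le makes both the Lipschitz error and the Chebyshev error
     vanish. *)
  let ?bound = "\<lambda>N. 2 * (?R * (1 / sqrt (sqrt (real N))) + 2 / real N
                        + 1 / (real N * (1 / sqrt (sqrt (real N)))\<^sup>2))"
  have "(\<lambda>N. 1 / sqrt (sqrt (real N))) \<longlonglongrightarrow> 0" "(\<lambda>N. 2 / real N) \<longlonglongrightarrow> 0"
    "(\<lambda>N. 1 / (real N * (1 / sqrt (sqrt (real N)))\<^sup>2)) \<longlonglongrightarrow> 0" by real_asymp+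
  hence "?bound \<longlonglongrightarrow> 2 * (?R * 0 + 0 + 0)" by (intro tendsto_intros)
  hence vanish: "?bound \<longlonglongrightarrow> 0" by simp
  have upper: "\<forall>\<^sub>F N in sequentially. tvd d (marginal N (?out N)) ?extreme \<le> ?bound N"
    using eventually_ge_at_top[of 1] by eventually_elim (rule tvd_output_le, use assms in simp_all)
  have lower: "\<forall>\<^sub>F N in sequentially. 0 \<le> tvd d (marginal N (?out N)) ?extreme"
    by (simp add: tvd_nonneg)
  have "(\<lambda>N. tvd d (marginal N (?out N)) ?extreme) \<longlonglongrightarrow> 0"
    by (rule tendsto_sandwich[OF lower upper tendsto_const vanish])
  thus ?thesis unfolding Let_def using mem_therm_eq_tensor_eta_marginal by blast
qed

end
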